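(* For $n\in\{2,3\}$, in $\mathcal X(GU(n,2),\Phi(n,2))$: (a) The symmetrization, with relations $\mathcal R_0$, $\mathcal R_1\cup\mathcal R_2$, $\mathcal R_3$, $\mathcal R_4\cup\mathcal R_5$ (in this column order), is an association scheme whose character table (rows followed by multiplicities) is, for $n=2$: $(1,2,2,4)$ [1], $(1,-1,2,-2)$ [2], $(1,2,-1,-2)$ [2], $(1,-1,-1,1)$ [4]; and for $n=3$: $(1,2,8,16)$ [1], $(1,-1,-4,4)$ [6], $(1,2,-1,-2)$ [8], $(1,-1,2,-2)$ [12]. (b) The partition with relations $\mathcal R_0$, $\widehat R_1=\mathcal R_1\cup\mathcal R_2$, $\widehat R_2=\mathcal R_3\cup\mathcal R_4\cup\mathcal R_5$ yields a 2-class fusion scheme whose character table (rows followed by multiplicities) is, for $n=2$: $(1,2,6)$ [1], $(1,2,-3)$ [2], $(1,-1,0)$ [6]; and for $n=3$: $(1,2,24)$ [1], $(1,2,-3)$ [8], $(1,-1,0)$ [18].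
   Context: Let $\Phi=\Phi(n,2)=\{x\in\mathbb{F}_4^n\setminus\{0\}:\langle x,x\rangle=0\}$, $\langle x,y\rangle=\sum_kx_ky_k^2$, and $\mathcal X(GU(n,2),\Phi(n,2))$ the association scheme of orbitals of $GU(n,2)$ acting on $\Phi$ by $x\mapsto xU$. Fix a primitive $\alpha\in\mathbb{F}_4$. For $n\in\{2,3\}$ the relations are $\mathcal R_l=\{(x,y)\in\Phi^2:y=\alpha^lx\}$ ($l=0,1,2$) and $\mathcal R_l=\{(x,y)\in\Phi^2:\langle x,y\rangle=\alpha^l\}$ ($l=3,4,5$). A fusion scheme of $\mathcal X$ is an association scheme on the same set each of whose relations is a union of relations of $\mathcal X$; the symmetrization fuses each relation with its converse. Character table: $P=[p_j(i)]$ with $A_j=\sum_ip_j(i)E_i$ over the primitive idempotents $E_i$ ($E_0=\frac1{|\Phi|}J$ first), multiplicity $=\mathrm{rank}\,E_i$; rows are given up to ordering of $E_1,\dots$. *)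

theory Defs
  imports Complex_Main "Jordan_Normal_Form.DL_Rank"
begin

text \<open>F_4 = {0, 1, a, b} with a a primitive element, a^2 = b = a + 1.\<close>

datatype gf4 = Z4 | O4 | A4 | B4

instantiation gf4 :: field
begin

definition zero_gf4 :: gf4 where "zero_gf4 = Z4"
definition one_gf4 :: gf4 where "one_gf4 = O4"

fun plus_gf4 :: "gf4 \<Rightarrow> gf4 \<Rightarrow> gf4" where
  "plus_gf4 Z4 y = y"
| "plus_gf4 x Z4 = x"
| "plus_gf4 O4 O4 = Z4" | "plus_gf4 O4 A4 = B4" | "plus_gf4 O4 B4 = A4"
| "plus_gf4 A4 O4 = B4" | "plus_gf4 A4 A4 = Z4" | "plus_gf4 A4 B4 = O4"
| "plus_gf4 B4 O4 = A4" | "plus_gf4 B4 A4 = O4" | "plus_gf4 B4 B4 = Z4"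

definition uminus_gf4 :: "gf4 \<Rightarrow> gf4" where "uminus_gf4 x = x"
definition minus_gf4 :: "gf4 \<Rightarrow> gf4 \<Rightarrow> gf4" where "minus_gf4 x y = x + y"

fun times_gf4 :: "gf4 \<Rightarrow> gf4 \<Rightarrow> gf4" where
  "times_gf4 Z4 y = Z4"
| "times_gf4 x Z4 = Z4"
| "times_gf4 O4 y = y"
| "times_gf4 x O4 = x"
| "times_gf4 A4 A4 = B4" | "times_gf4 A4 B4 = O4"
| "times_gf4 B4 A4 = O4" | "times_gf4 B4 B4 = A4"

fun inverse_gf4 :: "gf4 \<Rightarrow> gf4" where
  "inverse_gf4 Z4 = Z4" | "inverse_gf4 O4 = O4"
| "inverse_gf4 A4 = B4" | "inverse_gf4 B4 = A4"

definition divide_gf4 :: "gf4 \<Rightarrow> gf4 \<Rightarrow> gf4" where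
  "divide_gf4 x y = x * inverse y"

instance
proof
  fix a b c :: gf4
  show "a + b + c = a + (b + c)" by (cases a; cases b; cases c; simp)
  show "a + b = b + a" by (cases a; cases b; simp)
  show "0 + a = a" by (simp add: zero_gf4_def)
  show "- a + a = 0" by (cases a; simp add: uminus_gf4_def zero_gf4_def)
  show "a - b = a + - b" by (simp add: minus_gf4_def uminus_gf4_def)
  show "a * b * c = a * (b * c)" by (cases a; cases b; cases c; simp)
  show "a * b = b * a" by (cases a; cases b; simp)
  show "1 * a = a" by (cases a; simp add: one_gf4_def)
  show "(a + b) * c = a * c + b * c" by (cases a; cases b; cases c; simp)
  show "(0::gf4) \<noteq> 1" by (simp add: zero_gf4_def one_gf4_def)
  show "a \<noteq> 0 \<Longrightarrow> inverse a * a = 1"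
    by (cases a; simp add: zero_gf4_def one_gf4_def)
  show "divide a b = times a (inverse b :: gf4)" by (simp add: divide_gf4_def)
  show "inverse (0::gf4) = (0::gf4)" by (simp add: zero_gf4_def)
qed

end

definition alpha :: gf4 where "alpha = A4"

definition herm :: "gf4 list \<Rightarrow> gf4 list \<Rightarrow> gf4" where
  "herm x y = sum_list (map2 (\<lambda>a b. a * b ^ 2) x y)"

definition Phi :: "nat \<Rightarrow> gf4 list set" where
  "Phi n = {x. length x = n \<and> x \<noteq> replicate n 0 \<and> herm x x = 0}"

definition smult_vec4 :: "gf4 \<Rightarrow> gf4 list \<Rightarrow> gf4 list" where
  "smult_vec4 c x = map (\<lambda>a. c * a) x"

definition Rel :: "nat \<Rightarrow> nat \<Rightarrow> (gf4 list \<times> gf4 list) set" where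
  "Rel n l = (if l < 3
     then {(x, y). x \<in> Phi n \<and> y \<in> Phi n \<and> y = smult_vec4 (alpha ^ l) x}
     else {(x, y). x \<in> Phi n \<and> y \<in> Phi n \<and> herm x y = alpha ^ l})"

definition assoc_scheme :: "'a set \<Rightarrow> ('a \<times> 'a) set list \<Rightarrow> bool" where
  "assoc_scheme X Rs \<longleftrightarrow>
     finite X \<and> Rs \<noteq> [] \<and>
     Rs ! 0 = Id_on X \<and>
     (\<forall>R \<in> set Rs. R \<noteq> {} \<and> R \<subseteq> X \<times> X) \<and>
     (\<forall>i < length Rs. \<forall>j < length Rs. i \<noteq> j \<longrightarrow> Rs ! i \<inter> Rs ! j = {}) \<and>
     \<Union> (set Rs) = X \<times> X \<and>
     (\<forall>i < length Rs. \<exists>j < length Rs. converse (Rs ! i) = Rs ! j) \<and>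
     (\<forall>i < length Rs. \<forall>j < length Rs. \<forall>k < length Rs. \<exists>p::nat.
        \<forall>(x, y) \<in> Rs ! k. card {z \<in> X. (x, z) \<in> Rs ! i \<and> (z, y) \<in> Rs ! j} = p)"

definition adj_mat :: "'a list \<Rightarrow> ('a \<times> 'a) set \<Rightarrow> complex mat" where
  "adj_mat xs R = mat (length xs) (length xs)
     (\<lambda>(i, j). if (xs ! i, xs ! j) \<in> R then 1 else 0)"

definition lincomb_mat :: "nat \<Rightarrow> (nat \<Rightarrow> complex) \<Rightarrow> complex mat list \<Rightarrow> complex mat" where
  "lincomb_mat N c Ms = mat N N (\<lambda>(i, j). \<Sum>k < length Ms. c k * Ms ! k $$ (i, j))"

definition bose_mesner :: "'a list \<Rightarrow> ('a \<times> 'a) set list \<Rightarrow> complex mat set" where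
  "bose_mesner xs Rs = {lincomb_mat (length xs) c (map (adj_mat xs) Rs) | c. True}"

definition primitive_idempotent :: "complex mat set \<Rightarrow> complex mat \<Rightarrow> bool" where
  "primitive_idempotent Alg E \<longleftrightarrow>
     E \<in> Alg \<and> E * E = E \<and> E \<noteq> 0\<^sub>m (dim_row E) (dim_col E) \<and>
     (\<forall>F \<in> Alg. F * F = F \<longrightarrow> E * F = 0\<^sub>m (dim_row E) (dim_col E) \<or> E * F = E)"

text \<open>The scheme (X, Rs) has character table P (list of rows; P!i!j = p_j(i))
  with multiplicities m (m!i = rank E_i): for any enumeration of X, the primitive
  idempotents can be ordered E_0 = J/|X|, E_1, ..., E_d so that
  A_j = sum_i p_j(i) E_i and rank E_i = m!i.\<close>

definition has_char_table ::
  "'a set \<Rightarrow> ('a \<times> 'a) set list \<Rightarrow> int list list \<Rightarrow> nat list \<Rightarrow> bool" where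
  "has_char_table X Rs P m \<longleftrightarrow>
     (\<forall>xs. distinct xs \<and> set xs = X \<longrightarrow>
       (let N = length xs; d1 = length Rs; Alg = bose_mesner xs Rs in
        \<exists>Es :: complex mat list.
          length Es = d1 \<and> distinct Es \<and>
          Es ! 0 = mat N N (\<lambda>_. 1 / of_nat N) \<and>
          (\<forall>i < d1. primitive_idempotent Alg (Es ! i)) \<and>
          (\<forall>E. primitive_idempotent Alg E \<longrightarrow> E \<in> set Es) \<and>
          (\<forall>j < d1. adj_mat xs (Rs ! j) = lincomb_mat N (\<lambda>i. of_int (P ! i ! j)) Es) \<and>
          (\<forall>i < d1. vec_space.rank N (Es ! i) = m ! i)))"

end

theory Submission
  imports Defs
begin

text \<open>Monomial maps \<open>x \<mapsto> rotate j (d \<odot> x)\<close> with \<open>d\<close> in \<open>(F_4\<^sup>*)\<^sup>n\<close> lie in \<open>GU(n, 2)\<close>, act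
  transitively on \<open>\<Phi>(n, 2)\<close> and preserve every relation, so all intersection numbers can be
  counted from one base point.  The fused relations then form symmetric schemes whose
  Bose--Mesner algebras are identified with coefficient functions multiplied through the
  intersection numbers.  Candidate idempotents \<open>E_i\<close>, given by integral coefficient vectors,
  are checked to satisfy \<open>E_i\<^sup>2 = E_i\<close>, \<open>E_i A_j = p_j(i) E_i\<close> and
  \<open>A_j = \<Sum>_i p_j(i) E_i\<close>; these identities force the \<open>E_i\<close> to be exactly the primitive idempotents.  Finally \<open>rank E_i \<le> m_i\<close> is certified by
  \<open>m_i\<close> columns spanning the column space, and since \<open>\<Sum> E_i = I\<close> and \<open>\<Sum> m_i = |\<Phi>|\<close> all these
  bounds are equalities.  The idempotents of the 2-class fusion are \<open>E_0\<close>, \<open>E_2\<close> and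
  \<open>E_1 + E_3\<close> of the symmetrization.  The finite checks for \<open>|\<Phi>(2, 2)| = 9\<close> and
  \<open>|\<Phi>(3, 2)| = 27\<close> are done by evaluation.\<close>

section \<open>Matrices indexed by an enumeration of the points\<close>

definition mat_on :: "'a list \<Rightarrow> ('a \<Rightarrow> 'a \<Rightarrow> complex) \<Rightarrow> complex mat" where
  "mat_on xs K = mat (length xs) (length xs) (\<lambda>(i, j). K (xs ! i) (xs ! j))"

lemma mat_on_carrier [simp]: "mat_on xs K \<in> carrier_mat (length xs) (length xs)"
  by (simp add: mat_on_def)

lemma dim_mat_on [simp]:
  "dim_row (mat_on xs K) = length xs" "dim_col (mat_on xs K) = length xs"
  by (simp_all add: mat_on_def)

lemma index_mat_on [simp]:
  "i < length xs \<Longrightarrow> j < length xs \<Longrightarrow> mat_on xs K $$ (i, j) = K (xs ! i) (xs ! j)"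
  by (simp add: mat_on_def)

lemma mat_on_cong:
  assumes "\<And>x y. x \<in> set xs \<Longrightarrow> y \<in> set xs \<Longrightarrow> K x y = K' x y"
  shows "mat_on xs K = mat_on xs K'"
  using assms by (intro eq_matI) auto

lemma mat_on_add: "mat_on xs K + mat_on xs L = mat_on xs (\<lambda>x y. K x y + L x y)"
  by (intro eq_matI) auto

lemma mat_on_mult:
  assumes "distinct xs"
  shows "mat_on xs K * mat_on xs L = mat_on xs (\<lambda>x y. \<Sum>z\<in>set xs. K x z * L z y)"
proof (intro eq_matI)
  fix i j assume "i < dim_row (mat_on xs (\<lambda>x y. \<Sum>z\<in>set xs. K x z * L z y))"
    "j < dim_col (mat_on xs (\<lambda>x y. \<Sum>z\<in>set xs. K x z * L z y))"
  then have ij: "i < length xs" "j < length xs" by auto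
  have "(mat_on xs K * mat_on xs L) $$ (i, j) = (\<Sum>c<length xs. K (xs ! i) (xs ! c) * L (xs ! c) (xs ! j))"
    using ij by (simp add: scalar_prod_def atLeast0LessThan)
  also have "\<dots> = sum_list (map (\<lambda>z. K (xs ! i) z * L z (xs ! j)) xs)"
    by (simp add: sum_list_sum_nth atLeast0LessThan)
  also have "\<dots> = (\<Sum>z\<in>set xs. K (xs ! i) z * L z (xs ! j))"
    using assms by (simp add: sum_list_distinct_conv_sum_set)
  finally show "(mat_on xs K * mat_on xs L) $$ (i, j) = mat_on xs (\<lambda>x y. \<Sum>z\<in>set xs. K x z * L z y) $$ (i, j)"
    using ij by simp
qed auto

lemma rank_sum_outer_products_le:
  fixes U V :: "nat \<Rightarrow> nat \<Rightarrow> complex"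
  shows "vec_space.rank N (mat N N (\<lambda>(i, j). \<Sum>t<m. U t i * V t j)) \<le> m"
proof (induction m)
  case 0
  have "mat N N (\<lambda>(i, j). \<Sum>t<0. U t i * V t j) = 0\<^sub>m N N" by (intro eq_matI) auto
  then show ?case by (simp only: vec_space.rank_0I order_refl)
next
  case (Suc m)
  let ?A = "mat N N (\<lambda>(i, j). \<Sum>t<m. U t i * V t j)" and ?B = "mat N N (\<lambda>(i, j). U m i * V m j)"
  have sum: "mat N N (\<lambda>(i, j). \<Sum>t<Suc m. U t i * V t j) = ?A + ?B"
    by (intro eq_matI) auto
  have "vec_space.rank N (mat N N (\<lambda>(i, j). \<Sum>t<Suc m. U t i * V t j))
      \<le> vec_space.rank N ?A + vec_space.rank N ?B"
    unfolding sum by (rule vec_space.rank_subadditive) auto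
  moreover have "vec_space.rank N ?B \<le> 1"
    by (rule vec_space.rank_le_1_product_entries) auto
  ultimately show ?case using Suc.IH by linarith
qed

lemma rank_mat_on_le:
  assumes "\<And>x y. x \<in> set xs \<Longrightarrow> y \<in> set xs \<Longrightarrow> K x y = (\<Sum>t<m. u t x * v t y)"
  shows "vec_space.rank (length xs) (mat_on xs K) \<le> m"
proof -
  have "mat_on xs K = mat (length xs) (length xs) (\<lambda>(i, j). \<Sum>t<m. u t (xs ! i) * v t (xs ! j))"
    using assms by (intro eq_matI) auto
  then show ?thesis
    using rank_sum_outer_products_le[of "length xs" "\<lambda>t i. u t (xs ! i)" "\<lambda>t j. v t (xs ! j)" m]
    by simp
qed

lemma rank_mat_on_add_le:
  "vec_space.rank (length xs) (mat_on xs (\<lambda>x y. K x y + L x y))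
     \<le> vec_space.rank (length xs) (mat_on xs K) + vec_space.rank (length xs) (mat_on xs L)"
  using vec_space.rank_subadditive[OF mat_on_carrier mat_on_carrier, of xs K L]
  by (simp add: mat_on_add)

text \<open>Rank certificate: each column \<open>K _ (L ! j)\<close> is the integral combination, with
  coefficients \<open>V ! j\<close>, of the columns indexed by \<open>S\<close>.  The certificates below are phrased
  with partially applied constants rather than \<open>\<lambda>\<close>-terms, so that evaluating them never
  computes with symbolic points.\<close>

definition lin_comb :: "int list \<Rightarrow> int list \<Rightarrow> int" where
  "lin_comb ks cs = (\<Sum>(k, c)\<leftarrow>zip ks cs. k * c)"

definition row_cert :: "('a \<Rightarrow> 'a \<Rightarrow> int) \<Rightarrow> 'a list \<Rightarrow> 'a list \<Rightarrow> int list list \<Rightarrow> 'a \<Rightarrow> bool" where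
  "row_cert K L S V x \<longleftrightarrow> map (K x) L = map (lin_comb (map (K x) S)) V"

definition column_cert :: "('a \<Rightarrow> 'a \<Rightarrow> int) \<Rightarrow> 'a list \<Rightarrow> 'a list \<Rightarrow> int list list \<Rightarrow> bool" where
  "column_cert K L S V \<longleftrightarrow> length V = length L \<and> (\<forall>v\<in>set V. length v = length S) \<and>
     list_all (row_cert K L S V) L"

lemma column_cert_entry:
  assumes cert: "column_cert K L S V" and x: "x \<in> set L" and j: "j < length L"
  shows "K x (L ! j) = (\<Sum>t<length S. K x (S ! t) * V ! j ! t)"
proof -
  have lengths: "length V = length L" "length (V ! j) = length S"
    using cert j by (auto simp: column_cert_def)
  have "K x (L ! j) = map (K x) L ! j" using j by simp
  also have "\<dots> = lin_comb (map (K x) S) (V ! j)"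
    using cert x j lengths(1) by (simp add: column_cert_def row_cert_def list_all_iff)
  also have "\<dots> = (\<Sum>t<length S. K x (S ! t) * V ! j ! t)"
    using lengths(2) by (simp add: lin_comb_def sum_list_sum_nth atLeast0LessThan)
  finally show ?thesis .
qed

lemma rank_mat_on_le_column_cert:
  fixes M :: complex
  assumes cert: "column_cert K L S V" and xs: "set xs = set L"
  shows "vec_space.rank (length xs) (mat_on xs (\<lambda>x y. of_int (K x y) / M)) \<le> length S"
proof -
  define pos where "pos y = (SOME j. j < length L \<and> L ! j = y)" for y
  show ?thesis
  proof (rule rank_mat_on_le[where u = "\<lambda>t x. of_int (K x (S ! t)) / M"
        and v = "\<lambda>t y. of_int (V ! pos y ! t)"])
    fix x y assume "x \<in> set xs" "y \<in> set xs"
    then have x: "x \<in> set L" and "y \<in> set L" using xs by auto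
    then have j: "pos y < length L" "L ! pos y = y"
      unfolding pos_def by (metis (mono_tags, lifting) in_set_conv_nth someI_ex)+
    then have "K x y = (\<Sum>t<length S. K x (S ! t) * V ! pos y ! t)"
      using column_cert_entry[OF cert x j(1)] by simp
    then show "of_int (K x y) / M = (\<Sum>t<length S. of_int (K x (S ! t)) / M * of_int (V ! pos y ! t))"
      by (simp add: sum_divide_distrib)
  qed
qed

section \<open>Symmetric schemes given by a relation index\<close>

definition index_rels :: "'a set \<Rightarrow> ('a \<Rightarrow> 'a \<Rightarrow> nat) \<Rightarrow> nat \<Rightarrow> ('a \<times> 'a) set list" where
  "index_rels X r D = map (\<lambda>j. {(x, y). x \<in> X \<and> y \<in> X \<and> r x y = j}) [0..<D]"

definition delta :: "nat \<Rightarrow> nat \<Rightarrow> complex" where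
  "delta j k = (if k = j then 1 else 0)"

lemma sum_mult_delta_right: "(\<Sum>k<D. h k * delta j k) = (if j < D then h j else 0)"
  by (simp add: delta_def if_distrib[of "\<lambda>t. _ * t"] sum.delta' cong: if_cong)

lemma sum_mult_delta_left: "(\<Sum>k<D. h k * delta k j) = (if j < D then h j else 0)"
  by (simp add: delta_def if_distrib[of "\<lambda>t. _ * t"] sum.delta cong: if_cong)

text \<open>\<open>r x y\<close> is the index of the relation containing \<open>(x, y)\<close>, and
  \<open>pn k a b\<close> the intersection number \<open>p^k_{ab}\<close>.\<close>

locale index_scheme =
  fixes X :: "'a set" and r :: "'a \<Rightarrow> 'a \<Rightarrow> nat" and D :: nat
    and pn :: "nat \<Rightarrow> nat \<Rightarrow> nat \<Rightarrow> nat"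
  assumes finite_X: "finite X" and X_nonempty: "X \<noteq> {}"
    and index_less: "\<And>x y. x \<in> X \<Longrightarrow> y \<in> X \<Longrightarrow> r x y < D"
    and index_eq_0_iff: "\<And>x y. x \<in> X \<Longrightarrow> y \<in> X \<Longrightarrow> r x y = 0 \<longleftrightarrow> x = y"
    and index_surj: "\<And>k. k < D \<Longrightarrow> \<exists>x\<in>X. \<exists>y\<in>X. r x y = k"
    and index_sym: "\<And>x y. x \<in> X \<Longrightarrow> y \<in> X \<Longrightarrow> r y x = r x y"
    and card_intersection:
      "\<And>x y a b. x \<in> X \<Longrightarrow> y \<in> X \<Longrightarrow> card {z\<in>X. r x z = a \<and> r z y = b} = pn (r x y) a b"
begin

abbreviation Rs where "Rs \<equiv> index_rels X r D"

lemma length_Rs [simp]: "length Rs = D"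
  by (simp add: index_rels_def)

lemma nth_Rs: "j < D \<Longrightarrow> Rs ! j = {(x, y). x \<in> X \<and> y \<in> X \<and> r x y = j}"
  by (simp add: index_rels_def)

lemma D_pos: "0 < D"
  using X_nonempty index_less by fastforce

lemma assoc_scheme: "assoc_scheme X Rs"
  unfolding assoc_scheme_def
proof (intro conjI allI impI ballI)
  show "finite X" by (rule finite_X)
  show "Rs \<noteq> []" using D_pos by (simp add: index_rels_def)
  show "Rs ! 0 = Id_on X" using D_pos index_eq_0_iff by (auto simp: nth_Rs Id_on_def)
  fix R assume "R \<in> set Rs"
  then obtain j where j: "j < D" "R = Rs ! j" by (auto simp: in_set_conv_nth)
  show "R \<noteq> {}" using index_surj[OF j(1)] j by (auto simp: nth_Rs)
  show "R \<subseteq> X \<times> X" using j by (auto simp: nth_Rs)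
next
  fix i j assume "i < length Rs" "j < length Rs" "i \<noteq> j"
  then show "Rs ! i \<inter> Rs ! j = {}" by (auto simp: nth_Rs)
next
  show "\<Union> (set Rs) = X \<times> X"
    using index_less by (fastforce simp: index_rels_def)
next
  fix i assume "i < length Rs"
  then have "converse (Rs ! i) = Rs ! i" using index_sym by (auto simp: nth_Rs)
  then show "\<exists>j<length Rs. converse (Rs ! i) = Rs ! j" using \<open>i < length Rs\<close> by blast
next
  fix i j k assume ijk: "i < length Rs" "j < length Rs" "k < length Rs"
  show "\<exists>p::nat. \<forall>(x, y)\<in>Rs ! k. card {z \<in> X. (x, z) \<in> Rs ! i \<and> (z, y) \<in> Rs ! j} = p"
  proof (intro exI[of _ "pn k i j"] ballI, clarify)
    fix x y assume "(x, y) \<in> Rs ! k"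
    then have xy: "x \<in> X" "y \<in> X" "r x y = k" using ijk by (auto simp: nth_Rs)
    have "{z \<in> X. (x, z) \<in> Rs ! i \<and> (z, y) \<in> Rs ! j} = {z\<in>X. r x z = i \<and> r z y = j}"
      using ijk xy by (auto simp: nth_Rs)
    then show "card {z \<in> X. (x, z) \<in> Rs ! i \<and> (z, y) \<in> Rs ! j} = pn k i j"
      using card_intersection[OF xy(1,2)] xy(3) by simp
  qed
qed

lemma intersection_number_swap:
  assumes "k < D"
  shows "pn k a b = pn k b a"
proof -
  obtain x y where xy: "x \<in> X" "y \<in> X" "r x y = k" using index_surj[OF assms] by blast
  have "pn k a b = card {z\<in>X. r x z = a \<and> r z y = b}" using card_intersection[OF xy(1,2)] xy(3) by simp
  also have "\<dots> = card {z\<in>X. r y z = b \<and> r z x = a}" using index_sym xy(1,2) by metis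
  also have "\<dots> = pn k b a" using card_intersection[OF xy(2,1)] index_sym[OF xy(1,2)] xy(3) by simp
  finally show ?thesis .
qed

text \<open>Elements of the Bose--Mesner algebra are the matrices \<open>coef_mat xs c = \<Sum>k c k A_k\<close>;
  \<open>conv\<close> is their product on coefficient functions.\<close>

definition conv :: "(nat \<Rightarrow> complex) \<Rightarrow> (nat \<Rightarrow> complex) \<Rightarrow> nat \<Rightarrow> complex" where
  "conv f g k = (\<Sum>a<D. \<Sum>b<D. f a * g b * of_nat (pn k a b))"

definition coef_mat :: "'a list \<Rightarrow> (nat \<Rightarrow> complex) \<Rightarrow> complex mat" where
  "coef_mat xs c = mat_on xs (\<lambda>x y. c (r x y))"

lemma coef_mat_carrier [simp]: "coef_mat xs f \<in> carrier_mat (length xs) (length xs)"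
  by (simp add: coef_mat_def)

lemma dim_coef_mat [simp]:
  "dim_row (coef_mat xs f) = length xs" "dim_col (coef_mat xs f) = length xs"
  by (simp_all add: coef_mat_def)

lemma sum_index_product:
  assumes "x \<in> X" "y \<in> X"
  shows "(\<Sum>z\<in>X. f (r x z) * g (r z y)) = conv f g (r x y)"
proof -
  have "(\<Sum>z\<in>X. f (r x z) * g (r z y))
      = (\<Sum>z\<in>X. \<Sum>a<D. \<Sum>b<D. if r x z = a \<and> r z y = b then f a * g b else 0)"
  proof (rule sum.cong[OF refl])
    fix z assume z: "z \<in> X"
    have "(\<Sum>a<D. \<Sum>b<D. if r x z = a \<and> r z y = b then f a * g b else 0)
        = (\<Sum>a<D. if r x z = a then (\<Sum>b<D. if r z y = b then f a * g b else 0) else 0)"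
      by (rule sum.cong[OF refl]) auto
    also have "\<dots> = f (r x z) * g (r z y)"
      using index_less[OF assms(1) z] index_less[OF z assms(2)] by (simp add: sum.delta sum.delta')
    finally show "f (r x z) * g (r z y)
        = (\<Sum>a<D. \<Sum>b<D. if r x z = a \<and> r z y = b then f a * g b else 0)" by simp
  qed
  also have "\<dots> = (\<Sum>a<D. \<Sum>b<D. \<Sum>z\<in>X. if r x z = a \<and> r z y = b then f a * g b else 0)"
    by (subst sum.swap, rule sum.cong[OF refl], rule sum.swap)
  also have "\<dots> = (\<Sum>a<D. \<Sum>b<D. of_nat (card {z\<in>X. r x z = a \<and> r z y = b}) * (f a * g b))"
    using finite_X by (simp add: sum.If_cases Int_def)
  also have "\<dots> = conv f g (r x y)"
    unfolding conv_def using card_intersection[OF assms] by (simp add: mult_ac)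
  finally show ?thesis .
qed

lemma conv_commute: "k < D \<Longrightarrow> conv f g k = conv g f k"
  unfolding conv_def
  by (subst sum.swap) (simp add: intersection_number_swap mult_ac)

lemma conv_delta_right:
  assumes "b < D"
  shows "conv f (delta b) k = (\<Sum>a<D. f a * of_nat (pn k a b))"
proof -
  have "(\<Sum>b'<D. f a * delta b b' * of_nat (pn k a b')) = f a * of_nat (pn k a b)" for a
    using sum_mult_delta_right[where h = "\<lambda>b'. f a * of_nat (pn k a b')" and j = b] assms by (simp add: mult_ac)
  then show ?thesis unfolding conv_def by simp
qed

lemma conv_linear_right: "conv f g k = (\<Sum>b<D. g b * conv f (delta b) k)"
proof -
  have "conv f g k = (\<Sum>b<D. \<Sum>a<D. f a * g b * of_nat (pn k a b))"
    unfolding conv_def by (rule sum.swap)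
  then show ?thesis
    by (simp add: conv_delta_right sum_distrib_left mult_ac)
qed

lemma conv_scale_left: "conv (\<lambda>k. \<mu> * f k) g = (\<lambda>k. \<mu> * conv f g k)"
  unfolding conv_def by (rule ext) (simp add: sum_distrib_left mult_ac)

lemma conv_scale_right: "conv f (\<lambda>k. \<mu> * g k) = (\<lambda>k. \<mu> * conv f g k)"
  unfolding conv_def by (rule ext) (simp add: sum_distrib_left mult_ac)

context
  fixes xs assumes distinct_xs: "distinct xs" and set_xs: "set xs = X"
begin

lemma length_xs: "length xs = card X"
  using distinct_xs set_xs distinct_card by metis

lemma coef_mat_mult: "coef_mat xs f * coef_mat xs g = coef_mat xs (conv f g)"
  unfolding coef_mat_def mat_on_mult[OF distinct_xs] set_xs
  by (rule mat_on_cong) (simp add: set_xs sum_index_product)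

lemma coef_mat_eq_iff: "coef_mat xs f = coef_mat xs g \<longleftrightarrow> (\<forall>k<D. f k = g k)"
proof
  assume eq: "coef_mat xs f = coef_mat xs g"
  show "\<forall>k<D. f k = g k"
  proof (intro allI impI)
    fix k assume "k < D"
    then obtain x y where xy: "x \<in> X" "y \<in> X" "r x y = k" using index_surj by blast
    then obtain i j where ij: "i < length xs" "j < length xs" "xs ! i = x" "xs ! j = y"
      using set_xs by (metis in_set_conv_nth)
    have "coef_mat xs f $$ (i, j) = coef_mat xs g $$ (i, j)" using eq by simp
    then show "f k = g k" using ij xy by (simp add: coef_mat_def)
  qed
next
  assume "\<forall>k<D. f k = g k"
  then show "coef_mat xs f = coef_mat xs g"
    unfolding coef_mat_def by (intro mat_on_cong) (simp add: set_xs index_less)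
qed

lemma coef_mat_add: "coef_mat xs f + coef_mat xs g = coef_mat xs (\<lambda>k. f k + g k)"
  by (simp add: coef_mat_def mat_on_add)

lemma zero_eq_coef_mat: "0\<^sub>m (length xs) (length xs) = coef_mat xs (\<lambda>_. 0)"
  by (intro eq_matI) (auto simp: coef_mat_def)

lemma one_eq_coef_mat: "1\<^sub>m (length xs) = coef_mat xs (delta 0)"
proof (intro eq_matI)
  fix i j assume "i < dim_row (coef_mat xs (delta 0))" "j < dim_col (coef_mat xs (delta 0))"
  then have ij: "i < length xs" "j < length xs" by auto
  moreover have "xs ! i \<in> X" "xs ! j \<in> X" using ij set_xs by auto
  ultimately have "delta 0 (r (xs ! i) (xs ! j)) = (if i = j then 1 else 0)"
    using index_eq_0_iff nth_eq_iff_index_eq[OF distinct_xs ij] by (auto simp: delta_def)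
  then show "1\<^sub>m (length xs) $$ (i, j) = coef_mat xs (delta 0) $$ (i, j)"
    using ij by (simp add: coef_mat_def)
qed auto

lemma adj_mat_eq_coef_mat: "j < D \<Longrightarrow> adj_mat xs (Rs ! j) = coef_mat xs (delta j)"
  using set_xs by (intro eq_matI) (auto simp: adj_mat_def coef_mat_def nth_Rs delta_def)

lemma lincomb_adj_mat: "lincomb_mat (length xs) c (map (adj_mat xs) Rs) = coef_mat xs c"
proof (intro eq_matI)
  fix a b assume "a < dim_row (coef_mat xs c)" "b < dim_col (coef_mat xs c)"
  then have ab: "a < length xs" "b < length xs" by auto
  then have "r (xs ! a) (xs ! b) < D" using index_less set_xs by auto
  have "lincomb_mat (length xs) c (map (adj_mat xs) Rs) $$ (a, b)
      = (\<Sum>k<D. c k * delta k (r (xs ! a) (xs ! b)))"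
    using ab by (simp add: lincomb_mat_def adj_mat_eq_coef_mat coef_mat_def)
  also have "\<dots> = c (r (xs ! a) (xs ! b))"
    using \<open>r (xs ! a) (xs ! b) < D\<close> by (simp add: sum_mult_delta_left)
  finally show "lincomb_mat (length xs) c (map (adj_mat xs) Rs) $$ (a, b) = coef_mat xs c $$ (a, b)"
    using ab by (simp add: coef_mat_def)
qed (auto simp: lincomb_mat_def)

lemma bose_mesner_eq: "bose_mesner xs Rs = range (coef_mat xs)"
  unfolding bose_mesner_def using lincomb_adj_mat by auto

end

end

lemma card_intersection_transitive:
  assumes x0: "x0 \<in> X"
    and transitive: "\<And>x. x \<in> X \<Longrightarrow> \<exists>\<sigma>. bij_betw \<sigma> X X \<and> (\<forall>u\<in>X. \<forall>v\<in>X. r (\<sigma> u) (\<sigma> v) = r u v) \<and> \<sigma> x0 = x"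
    and base: "\<And>y. y \<in> X \<Longrightarrow> card {z\<in>X. r x0 z = a \<and> r z y = b} = pn (r x0 y) a b"
    and x: "x \<in> X" and y: "y \<in> X"
  shows "card {z\<in>X. r x z = a \<and> r z y = b} = pn (r x y) a b"
proof -
  obtain \<sigma> where bij: "bij_betw \<sigma> X X" and inv: "\<forall>u\<in>X. \<forall>v\<in>X. r (\<sigma> u) (\<sigma> v) = r u v"
    and \<sigma>x0: "\<sigma> x0 = x"
    using transitive[OF x] by blast
  obtain y' where y': "y' \<in> X" "\<sigma> y' = y" using bij y by (metis bij_betw_iff_bijections)
  have image: "\<sigma> ` {z\<in>X. r x0 z = a \<and> r z y' = b} = {z\<in>X. r x z = a \<and> r z y = b}"
  proof
    show "\<sigma> ` {z\<in>X. r x0 z = a \<and> r z y' = b} \<subseteq> {z\<in>X. r x z = a \<and> r z y = b}"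
      using bij inv \<sigma>x0 y' x0 by (auto simp: bij_betw_def)
    show "{z\<in>X. r x z = a \<and> r z y = b} \<subseteq> \<sigma> ` {z\<in>X. r x0 z = a \<and> r z y' = b}"
    proof
      fix z assume z: "z \<in> {z\<in>X. r x z = a \<and> r z y = b}"
      then obtain z' where "z' \<in> X" "\<sigma> z' = z" using bij by (metis (no_types, lifting) bij_betw_iff_bijections mem_Collect_eq)
      then show "z \<in> \<sigma> ` {z\<in>X. r x0 z = a \<and> r z y' = b}" using z inv \<sigma>x0 y' x0 by force
    qed
  qed
  have "inj_on \<sigma> {z\<in>X. r x0 z = a \<and> r z y' = b}"
    using bij by (auto simp: bij_betw_def intro: inj_on_subset)
  then have "card {z\<in>X. r x z = a \<and> r z y = b} = card {z\<in>X. r x0 z = a \<and> r z y' = b}"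
    using card_image image by fastforce
  also have "\<dots> = pn (r x0 y') a b" using base[OF y'(1)] .
  also have "r x0 y' = r x y" using inv x0 y' \<sigma>x0 by metis
  finally show ?thesis .
qed

section \<open>Character tables from the coefficients of the primitive idempotents\<close>

text \<open>\<open>e i k\<close> is the coefficient of \<open>A_k\<close> in the primitive idempotent \<open>E_i\<close>.\<close>

locale char_table_data = index_scheme +
  fixes e :: "nat \<Rightarrow> nat \<Rightarrow> complex" and P :: "int list list" and m :: "nat list"
  assumes idempotent: "\<And>i k. i < D \<Longrightarrow> k < D \<Longrightarrow> conv (e i) (e i) k = e i k"
    and eigenvalue: "\<And>i j k. i < D \<Longrightarrow> j < D \<Longrightarrow> k < D \<Longrightarrow> conv (e i) (delta j) k = of_int (P ! i ! j) * e i k"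
    and spectral: "\<And>j k. j < D \<Longrightarrow> k < D \<Longrightarrow> delta j k = (\<Sum>i<D. of_int (P ! i ! j) * e i k)"
    and coeff_0: "\<And>k. k < D \<Longrightarrow> e 0 k = 1 / of_nat (card X)"
    and coeff_diag_nonzero: "\<And>i. i < D \<Longrightarrow> e i 0 \<noteq> 0"
    and coeff_distinct: "\<And>i i'. i < D \<Longrightarrow> i' < D \<Longrightarrow> i \<noteq> i' \<Longrightarrow> \<exists>k<D. e i k \<noteq> e i' k"
    and rank_le: "\<And>xs i. distinct xs \<Longrightarrow> set xs = X \<Longrightarrow> i < D \<Longrightarrow>
      vec_space.rank (length xs) (coef_mat xs (e i)) \<le> m ! i"
    and sum_multiplicities: "(\<Sum>i<D. m ! i) = card X"
begin

definition eigval :: "nat \<Rightarrow> (nat \<Rightarrow> complex) \<Rightarrow> complex" where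
  "eigval i c = (\<Sum>b<D. c b * of_int (P ! i ! b))"

lemma conv_coeff: "i < D \<Longrightarrow> k < D \<Longrightarrow> conv (e i) c k = eigval i c * e i k"
  by (subst conv_linear_right) (simp add: eigenvalue eigval_def sum_distrib_left mult_ac)

lemma coeff_expansion: "k < D \<Longrightarrow> c k = (\<Sum>i<D. eigval i c * e i k)"
proof -
  assume k: "k < D"
  have "c k = (\<Sum>a<D. c a * delta a k)" using k by (simp add: sum_mult_delta_left)
  also have "\<dots> = (\<Sum>a<D. \<Sum>i<D. c a * of_int (P ! i ! a) * e i k)"
    using k by (simp add: spectral sum_distrib_left mult.assoc)
  also have "\<dots> = (\<Sum>i<D. eigval i c * e i k)"
    by (subst sum.swap) (simp add: eigval_def sum_distrib_right)
  finally show ?thesis .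
qed

context
  fixes xs assumes distinct_xs: "distinct xs" and set_xs: "set xs = X"
begin

abbreviation E where "E i \<equiv> coef_mat xs (e i)"

lemma E_mult: "i < D \<Longrightarrow> E i * coef_mat xs c = coef_mat xs (\<lambda>k. eigval i c * e i k)"
  by (simp add: coef_mat_mult[OF distinct_xs set_xs] coef_mat_eq_iff[OF distinct_xs set_xs] conv_coeff)

lemma mult_E: "i < D \<Longrightarrow> coef_mat xs c * E i = coef_mat xs (\<lambda>k. eigval i c * e i k)"
  by (simp add: coef_mat_mult[OF distinct_xs set_xs] coef_mat_eq_iff[OF distinct_xs set_xs]
      conv_commute[of _ c] conv_coeff)

lemma scaled_E_eq_iff:
  "i < D \<Longrightarrow> coef_mat xs (\<lambda>k. \<mu> * e i k) = coef_mat xs (\<lambda>k. \<nu> * e i k) \<longleftrightarrow> \<mu> = \<nu>"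
  using D_pos coeff_diag_nonzero by (auto simp: coef_mat_eq_iff[OF distinct_xs set_xs])

lemma E_idempotent: "i < D \<Longrightarrow> E i * E i = E i"
  by (simp add: coef_mat_mult[OF distinct_xs set_xs] coef_mat_eq_iff[OF distinct_xs set_xs] idempotent)

lemma E_nonzero: "i < D \<Longrightarrow> E i \<noteq> 0\<^sub>m (length xs) (length xs)"
  using D_pos coeff_diag_nonzero
  by (fastforce simp: zero_eq_coef_mat[OF distinct_xs set_xs] coef_mat_eq_iff[OF distinct_xs set_xs])

text \<open>Since \<open>E_i F = \<nu> E_i\<close> with \<open>\<nu> = eigval i F\<close>, idempotence of \<open>F\<close> gives \<open>\<nu>\<^sup>2 = \<nu>\<close>.\<close>

lemma eigval_idempotent:
  assumes i: "i < D" and idem: "coef_mat xs c * coef_mat xs c = coef_mat xs c"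
  shows "eigval i c = 0 \<or> eigval i c = 1"
proof -
  have "coef_mat xs (\<lambda>k. eigval i c * e i k) = E i * (coef_mat xs c * coef_mat xs c)"
    using E_mult[OF i] idem by simp
  also have "\<dots> = (E i * coef_mat xs c) * coef_mat xs c"
    by (rule assoc_mult_mat[symmetric]) auto
  also have "\<dots> = coef_mat xs (\<lambda>k. eigval i c * e i k) * coef_mat xs c"
    by (simp add: E_mult[OF i])
  also have "\<dots> = coef_mat xs (\<lambda>k. eigval i c * (eigval i c * e i k))"
    by (simp add: coef_mat_mult[OF distinct_xs set_xs] coef_mat_eq_iff[OF distinct_xs set_xs]
        conv_scale_left conv_coeff[OF i])
  finally have "coef_mat xs (\<lambda>k. eigval i c * e i k) = coef_mat xs (\<lambda>k. (eigval i c * eigval i c) * e i k)"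
    by (simp add: mult.assoc)
  then have "eigval i c = eigval i c * eigval i c"
    using scaled_E_eq_iff[OF i] by blast
  then show ?thesis by (metis mult_cancel_left1 mult_eq_0_iff)
qed

lemma E_primitive: "i < D \<Longrightarrow> primitive_idempotent (bose_mesner xs Rs) (E i)"
  unfolding primitive_idempotent_def bose_mesner_eq[OF distinct_xs set_xs]
proof (intro conjI ballI impI)
  assume i: "i < D"
  show "E i * E i = E i" using E_idempotent[OF i] .
  show "E i \<noteq> 0\<^sub>m (dim_row (E i)) (dim_col (E i))" using E_nonzero[OF i] by simp
  fix F assume "F \<in> range (coef_mat xs)" and F: "F * F = F"
  then obtain c where c: "F = coef_mat xs c" by auto
  then consider "eigval i c = 0" | "eigval i c = 1" using eigval_idempotent[OF i] F by blast
  then show "E i * F = 0\<^sub>m (dim_row (E i)) (dim_col (E i)) \<or> E i * F = E i"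
    by cases (simp_all add: c E_mult[OF i] zero_eq_coef_mat[OF distinct_xs set_xs])
qed simp

lemma primitive_idempotent_eq_E:
  assumes F: "primitive_idempotent (bose_mesner xs Rs) F"
  shows "\<exists>i<D. F = E i"
proof -
  have "F \<in> range (coef_mat xs)" and FF: "F * F = F"
    and F_nonzero: "F \<noteq> 0\<^sub>m (dim_row F) (dim_col F)"
    and primitive: "\<And>G. G \<in> range (coef_mat xs) \<Longrightarrow> G * G = G \<Longrightarrow>
      F * G = 0\<^sub>m (dim_row F) (dim_col F) \<or> F * G = F"
    using F unfolding primitive_idempotent_def bose_mesner_eq[OF distinct_xs set_xs] by auto
  then obtain c where c: "F = coef_mat xs c" by auto
  have "\<exists>i<D. eigval i c \<noteq> 0"
  proof (rule ccontr)
    assume "\<not> (\<exists>i<D. eigval i c \<noteq> 0)"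
    then have "\<forall>k<D. c k = 0" using coeff_expansion[of _ c] by simp
    then show False
      using F_nonzero c by (simp add: zero_eq_coef_mat[OF distinct_xs set_xs] coef_mat_eq_iff[OF distinct_xs set_xs])
  qed
  then obtain i where i: "i < D" and nonzero: "eigval i c \<noteq> 0" by blast
  have FE: "F * E i = coef_mat xs (\<lambda>k. eigval i c * e i k)" using mult_E[OF i] c by simp
  then have "F * E i \<noteq> 0\<^sub>m (length xs) (length xs)"
    using scaled_E_eq_iff[OF i, of _ 0] nonzero by (simp add: zero_eq_coef_mat[OF distinct_xs set_xs])
  then have "F * E i = F" using primitive[of "E i"] E_idempotent[OF i] c by auto
  then have F_eq: "F = coef_mat xs (\<lambda>k. eigval i c * e i k)" using FE by simp
  have "coef_mat xs (\<lambda>k. (eigval i c * eigval i c) * e i k) = F * F"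
    unfolding F_eq coef_mat_mult[OF distinct_xs set_xs] coef_mat_eq_iff[OF distinct_xs set_xs]
    using i by (simp add: conv_scale_left conv_scale_right idempotent)
  then have "eigval i c * eigval i c = eigval i c"
    using FF F_eq scaled_E_eq_iff[OF i] by simp
  then have "F = E i" using F_eq nonzero by simp
  then show ?thesis using i by blast
qed

lemma first_column_one: "i < D \<Longrightarrow> P ! i ! 0 = 1"
proof -
  assume i: "i < D"
  have "eigval i (delta 0) = of_int (P ! i ! 0)"
    using D_pos sum_mult_delta_right[where h = "\<lambda>b. of_int (P ! i ! b)" and j = 0]
    by (simp add: eigval_def mult.commute)
  then have "coef_mat xs (\<lambda>k. of_int (P ! i ! 0) * e i k) = coef_mat xs (\<lambda>k. 1 * e i k)"
    using E_mult[OF i, of "delta 0"] by (simp add: one_eq_coef_mat[OF distinct_xs set_xs, symmetric])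
  then show ?thesis using scaled_E_eq_iff[OF i, of "of_int (P ! i ! 0)" 1] by simp
qed

lemma sum_E: "coef_mat xs (\<lambda>k. \<Sum>i<D. e i k) = 1\<^sub>m (length xs)"
  unfolding one_eq_coef_mat[OF distinct_xs set_xs] coef_mat_eq_iff[OF distinct_xs set_xs]
  using D_pos by (simp add: spectral first_column_one)

lemma rank_sum_E_le:
  "vec_space.rank (length xs) (coef_mat xs (\<lambda>k. \<Sum>i<n. e i k))
     \<le> (\<Sum>i<n. vec_space.rank (length xs) (E i))"
proof (induction n)
  case 0
  then show ?case by (simp add: zero_eq_coef_mat[OF distinct_xs set_xs, symmetric] vec_space.rank_0I)
next
  case (Suc n)
  have "coef_mat xs (\<lambda>k. \<Sum>i<Suc n. e i k) = coef_mat xs (\<lambda>k. \<Sum>i<n. e i k) + E n"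
    by (simp add: coef_mat_add[OF distinct_xs set_xs])
  then have "vec_space.rank (length xs) (coef_mat xs (\<lambda>k. \<Sum>i<Suc n. e i k))
     \<le> vec_space.rank (length xs) (coef_mat xs (\<lambda>k. \<Sum>i<n. e i k)) + vec_space.rank (length xs) (E n)"
    by (metis vec_space.rank_subadditive coef_mat_carrier)
  then show ?case using Suc by simp
qed

text \<open>The ranks are bounded by the \<open>m ! i\<close>, which sum to \<open>|X|\<close>, while the \<open>E_i\<close> sum to the
  identity; so every bound is attained.\<close>

lemma rank_E: "i < D \<Longrightarrow> vec_space.rank (length xs) (E i) = m ! i"
proof (rule ccontr)
  assume i: "i < D" and "vec_space.rank (length xs) (E i) \<noteq> m ! i"
  then have "vec_space.rank (length xs) (E i) < m ! i"
    using rank_le[OF distinct_xs set_xs i] by linarith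
  then have "(\<Sum>j<D. vec_space.rank (length xs) (E j)) < (\<Sum>j<D. m ! j)"
    using i rank_le[OF distinct_xs set_xs] by (intro sum_strict_mono_ex1) auto
  moreover have "length xs = vec_space.rank (length xs) (1\<^sub>m (length xs) :: complex mat)"
    using vec_space.det_rank_iff[of "1\<^sub>m (length xs) :: complex mat" "length xs"] by simp
  then have "length xs \<le> (\<Sum>j<D. vec_space.rank (length xs) (E j))"
    using rank_sum_E_le[of D] by (simp add: sum_E)
  ultimately show False using sum_multiplicities length_xs[OF distinct_xs set_xs] by simp
qed

end

theorem has_char_table: "has_char_table X Rs P m"
  unfolding has_char_table_def Let_def
proof (intro allI impI)
  fix xs assume "distinct xs \<and> set xs = X"
  then have xs: "distinct xs" "set xs = X" by auto
  define Es where "Es = map (\<lambda>i. coef_mat xs (e i)) [0..<D]"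
  have inj: "inj_on (\<lambda>i. coef_mat xs (e i)) {..<D}"
    using coeff_distinct coef_mat_eq_iff[OF xs] by (fastforce intro: inj_onI)
  have E0: "coef_mat xs (e 0) = mat (length xs) (length xs) (\<lambda>_. 1 / of_nat (length xs))"
  proof -
    have "coef_mat xs (e 0) = coef_mat xs (\<lambda>_. 1 / of_nat (length xs))"
      using coef_mat_eq_iff[OF xs] coeff_0 length_xs[OF xs] by simp
    then show ?thesis by (auto intro!: eq_matI simp: coef_mat_def)
  qed
  have adj: "adj_mat xs (Rs ! j) = lincomb_mat (length xs) (\<lambda>i. of_int (P ! i ! j)) Es" if j: "j < D" for j
  proof -
    have "lincomb_mat (length xs) (\<lambda>i. of_int (P ! i ! j)) Es
        = coef_mat xs (\<lambda>k. \<Sum>i<D. of_int (P ! i ! j) * e i k)"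
      by (auto intro!: eq_matI simp: lincomb_mat_def Es_def coef_mat_def)
    also have "\<dots> = coef_mat xs (delta j)"
      using coef_mat_eq_iff[OF xs] j spectral by simp
    finally show ?thesis using adj_mat_eq_coef_mat[OF xs j] by simp
  qed
  have "\<forall>F. primitive_idempotent (bose_mesner xs Rs) F \<longrightarrow> F \<in> set Es"
    using primitive_idempotent_eq_E[OF xs] by (fastforce simp: Es_def)
  then show "\<exists>Es. length Es = length Rs \<and> distinct Es \<and>
      Es ! 0 = mat (length xs) (length xs) (\<lambda>_. 1 / of_nat (length xs)) \<and>
      (\<forall>i<length Rs. primitive_idempotent (bose_mesner xs Rs) (Es ! i)) \<and>
      (\<forall>F. primitive_idempotent (bose_mesner xs Rs) F \<longrightarrow> F \<in> set Es) \<and>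
      (\<forall>j<length Rs. adj_mat xs (Rs ! j) = lincomb_mat (length xs) (\<lambda>i. of_int (P ! i ! j)) Es) \<and>
      (\<forall>i<length Rs. vec_space.rank (length xs) (Es ! i) = m ! i)"
    using D_pos inj E0 adj E_primitive[OF xs] rank_E[OF xs]
    by (intro exI[of _ Es]) (auto simp: Es_def distinct_map lessThan_atLeast0)
qed

end

text \<open>Integral certificate for a character table: \<open>Q ! k ! i / M\<close> is the coefficient of
  \<open>A_k\<close> in \<open>E_i\<close>, and \<open>pn\<close>, \<open>N\<close> are the intersection numbers and the number of points.\<close>

definition int_table_cert ::
  "nat \<Rightarrow> (nat \<Rightarrow> nat \<Rightarrow> nat \<Rightarrow> nat) \<Rightarrow> int list list \<Rightarrow> int list list \<Rightarrow> nat \<Rightarrow> nat \<Rightarrow> nat list \<Rightarrow> bool"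
where
  "int_table_cert D pn P Q M N m \<longleftrightarrow> 0 < M \<and>
     (\<forall>i\<in>set [0..<D]. \<forall>k\<in>set [0..<D].
        (\<Sum>a\<leftarrow>[0..<D]. \<Sum>b\<leftarrow>[0..<D]. Q ! a ! i * Q ! b ! i * int (pn k a b)) = int M * Q ! k ! i) \<and>
     (\<forall>i\<in>set [0..<D]. \<forall>j\<in>set [0..<D]. \<forall>k\<in>set [0..<D].
        (\<Sum>a\<leftarrow>[0..<D]. Q ! a ! i * int (pn k a j)) = P ! i ! j * Q ! k ! i) \<and>
     (\<forall>j\<in>set [0..<D]. \<forall>k\<in>set [0..<D].
        (\<Sum>i\<leftarrow>[0..<D]. P ! i ! j * Q ! k ! i) = (if k = j then int M else 0)) \<and>
     (\<forall>k\<in>set [0..<D]. Q ! k ! 0 * int N = int M) \<and>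
     (\<forall>i\<in>set [0..<D]. Q ! 0 ! i \<noteq> 0) \<and>
     distinct (map (\<lambda>i. map (\<lambda>k. Q ! k ! i) [0..<D]) [0..<D]) \<and>
     (\<Sum>i\<leftarrow>[0..<D]. m ! i) = N \<and> m ! 0 = 1"

lemma sum_list_map_upt: "(\<Sum>i\<leftarrow>[0..<n]. f i) = (\<Sum>i<n. f i)"
  by (simp add: interv_sum_list_conv_sum_set_nat atLeast0LessThan)

context index_scheme
begin

lemma char_table_data_from_int_cert:
  assumes cert: "int_table_cert D pn P Q M (card X) m"
    and rank: "\<And>xs i. distinct xs \<Longrightarrow> set xs = X \<Longrightarrow> 0 < i \<Longrightarrow> i < D \<Longrightarrow>
      vec_space.rank (length xs) (mat_on xs (\<lambda>x y. of_int (Q ! r x y ! i) / of_nat M)) \<le> m ! i"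
  shows "char_table_data X r D pn (\<lambda>i k. of_int (Q ! k ! i) / of_nat M) P m"
proof -
  define e where "e i k = (of_int (Q ! k ! i) :: complex) / of_nat M" for i k
  have M: "0 < M" and
    idem: "\<And>i k. i < D \<Longrightarrow> k < D \<Longrightarrow>
      (\<Sum>a<D. \<Sum>b<D. Q ! a ! i * Q ! b ! i * int (pn k a b)) = int M * Q ! k ! i" and
    eigen: "\<And>i j k. i < D \<Longrightarrow> j < D \<Longrightarrow> k < D \<Longrightarrow>
      (\<Sum>a<D. Q ! a ! i * int (pn k a j)) = P ! i ! j * Q ! k ! i" and
    spectral: "\<And>j k. j < D \<Longrightarrow> k < D \<Longrightarrow>
      (\<Sum>i<D. P ! i ! j * Q ! k ! i) = (if k = j then int M else 0)" and
    coeff_0: "\<And>k. k < D \<Longrightarrow> Q ! k ! 0 * int (card X) = int M" and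
    diag: "\<And>i. i < D \<Longrightarrow> Q ! 0 ! i \<noteq> 0" and
    dist: "distinct (map (\<lambda>i. map (\<lambda>k. Q ! k ! i) [0..<D]) [0..<D])" and
    mult: "(\<Sum>i<D. m ! i) = card X" and m0: "m ! 0 = 1"
    using cert unfolding int_table_cert_def sum_list_map_upt by auto
  have M_nonzero: "(of_nat M :: complex) \<noteq> 0" using M by simp
  have X_nonzero: "card X \<noteq> 0" using finite_X X_nonempty by simp
  have e0: "e 0 k = 1 / of_nat (card X)" if "k < D" for k
  proof -
    have "of_int (Q ! k ! 0) * of_nat (card X) = (of_nat M :: complex)"
      using coeff_0[OF that] by (metis of_int_mult of_int_of_nat_eq)
    then show ?thesis using M_nonzero X_nonzero by (simp add: e_def field_simps)
  qed
  show ?thesis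
    unfolding e_def[symmetric]
  proof
    fix i k assume ik: "i < D" "k < D"
    have "conv (e i) (e i) k = of_int (\<Sum>a<D. \<Sum>b<D. Q ! a ! i * Q ! b ! i * int (pn k a b)) / (of_nat M * of_nat M)"
      by (simp add: conv_def e_def sum_divide_distrib)
    then show "conv (e i) (e i) k = e i k" using idem[OF ik] M_nonzero by (simp add: e_def)
  next
    fix i j k assume ijk: "i < D" "j < D" "k < D"
    have "conv (e i) (delta j) k = of_int (\<Sum>a<D. Q ! a ! i * int (pn k a j)) / of_nat M"
      using ijk by (simp add: conv_delta_right e_def sum_divide_distrib)
    then show "conv (e i) (delta j) k = of_int (P ! i ! j) * e i k" using eigen[OF ijk] by (simp add: e_def)
  next
    fix j k assume jk: "j < D" "k < D"
    have "(\<Sum>i<D. of_int (P ! i ! j) * e i k) = of_int (\<Sum>i<D. P ! i ! j * Q ! k ! i) / of_nat M"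
      by (simp add: e_def sum_divide_distrib)
    then show "delta j k = (\<Sum>i<D. of_int (P ! i ! j) * e i k)"
      using spectral[OF jk] M_nonzero by (simp add: delta_def)
  next
    fix k assume "k < D"
    then show "e 0 k = 1 / of_nat (card X)" by (rule e0)
  next
    fix i assume "i < D"
    then show "e i 0 \<noteq> 0" using diag M_nonzero by (simp add: e_def)
  next
    fix i i' assume ii': "i < D" "i' < D" "i \<noteq> i'"
    then have "map (\<lambda>k. Q ! k ! i) [0..<D] \<noteq> map (\<lambda>k. Q ! k ! i') [0..<D]"
      using dist inj_onD[of "\<lambda>i. map (\<lambda>k. Q ! k ! i) [0..<D]" "{0..<D}" i i'] by (auto simp: distinct_map)
    then obtain k where "k < D" "Q ! k ! i \<noteq> Q ! k ! i'" by (auto simp: map_eq_conv)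
    then show "\<exists>k<D. e i k \<noteq> e i' k" using M_nonzero by (auto simp: e_def)
  next
    fix xs i assume xs: "distinct xs" "set xs = X" and i: "i < D"
    show "vec_space.rank (length xs) (coef_mat xs (e i)) \<le> m ! i"
    proof (cases "i = 0")
      case True
      have "vec_space.rank (length xs) (coef_mat xs (e 0)) \<le> 1"
        unfolding coef_mat_def
        by (rule rank_mat_on_le[where u = "\<lambda>_ _. 1 / of_nat (card X)" and v = "\<lambda>_ _. 1"])
          (use e0 xs index_less in auto)
      then show ?thesis using True m0 by simp
    next
      case False
      then show ?thesis using rank[OF xs _ i] by (simp add: coef_mat_def e_def)
    qed
  qed (rule mult)
qed

lemma has_char_table_from_int_cert:
  assumes "int_table_cert D pn P Q M (card X) m"
    and "\<And>xs i. distinct xs \<Longrightarrow> set xs = X \<Longrightarrow> 0 < i \<Longrightarrow> i < D \<Longrightarrow>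
      vec_space.rank (length xs) (mat_on xs (\<lambda>x y. of_int (Q ! r x y ! i) / of_nat M)) \<le> m ! i"
  shows "has_char_table X Rs P m"
  using char_table_data.has_char_table[OF char_table_data_from_int_cert[OF assms]] .

end

lemma rank_le_column_certs:
  fixes M :: complex
  assumes certs: "list_all2 (\<lambda>i (S, V). column_cert (K i) L S V \<and> length S \<le> m ! i) is SVs"
    and i: "i \<in> set is" and xs: "set xs = set L"
  shows "vec_space.rank (length xs) (mat_on xs (\<lambda>x y. of_int (K i x y) / M)) \<le> m ! i"
proof -
  obtain p where p: "p < length is" "is ! p = i" using i by (metis in_set_conv_nth)
  obtain S V where SV: "SVs ! p = (S, V)" by fastforce
  have "column_cert (K i) L S V" and "length S \<le> m ! i"
    using list_all2_nthD[OF certs p(1)] p(2) SV by auto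
  then show ?thesis using rank_mat_on_le_column_cert[of "K i" L S V xs M] xs by simp
qed

section \<open>Monomial unitary maps\<close>

text \<open>\<open>monomial_act d j\<close> scales the coordinates by the nonzero entries of \<open>d\<close> and then rotates
  them cyclically \<open>j\<close> times; since \<open>c * c\<^sup>2 = 1\<close> for every \<open>c \<noteq> 0\<close> in \<open>F_4\<close>, this is an
  element of \<open>GU(n, 2)\<close>.\<close>

definition monomial_act :: "gf4 list \<Rightarrow> nat \<Rightarrow> gf4 list \<Rightarrow> gf4 list" where
  "monomial_act d j x = rotate j (map2 (*) d x)"

lemma herm_Cons: "herm (a # x) (b # y) = a * b ^ 2 + herm x y"
  by (simp add: herm_def)

lemma herm_scale_coordinates:
  fixes d :: "gf4 list"
  assumes "length d = length x" "length x = length y" "\<forall>c\<in>set d. c \<noteq> 0"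
  shows "herm (map2 (*) d x) (map2 (*) d y) = herm x y"
  using assms
proof (induction d x y rule: list_induct3)
  case Nil
  then show ?case by (simp add: herm_def)
next
  case (Cons c d a x b y)
  have "c * a * (c * b) ^ 2 = a * b ^ 2"
    using Cons.prems by (cases a; cases b; cases c) (simp_all add: power2_eq_square zero_gf4_def)
  then show ?case using Cons by (simp add: herm_Cons)
qed

lemma sum_list_rotate: "sum_list (rotate j (xs :: 'b :: comm_monoid_add list)) = sum_list xs"
  by (metis add.commute append_take_drop_id rotate_drop_take sum_list_append)

lemma zip_rotate: "length x = length y \<Longrightarrow> zip (rotate j x) (rotate j y) = rotate j (zip x y)"
  by (simp add: rotate_drop_take drop_zip take_zip)

lemma herm_rotate: "length x = length y \<Longrightarrow> herm (rotate j x) (rotate j y) = herm x y"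
  by (simp add: herm_def zip_rotate flip: rotate_map add: sum_list_rotate)

lemma rotate_eq_iff: "rotate j u = rotate j v \<longleftrightarrow> u = v"
  by (induction j) (auto simp: inj_eq[OF inj_rotate1])

lemma scale_coordinates_eq_iff:
  fixes d :: "gf4 list"
  assumes "length d = length x" "length x = length y" "\<forall>c\<in>set d. c \<noteq> 0"
  shows "map2 (*) d x = map2 (*) d y \<longleftrightarrow> x = y"
  using assms
proof (induction d x y rule: list_induct3)
  case (Cons c d a x b y)
  have "c * a = c * b \<longleftrightarrow> a = b"
    using Cons.prems by (cases a; cases b; cases c) (auto simp: zero_gf4_def)
  then show ?case using Cons by auto
qed simp

lemma rotate_replicate: "rotate j (replicate n a) = replicate n a"
  by (induction j) simp_all

lemma length_monomial_act [simp]: "length d = length x \<Longrightarrow> length (monomial_act d j x) = length x"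
  by (simp add: monomial_act_def)

lemma monomial_act_eq_iff:
  "length d = length x \<Longrightarrow> length d = length y \<Longrightarrow> \<forall>c\<in>set d. c \<noteq> 0 \<Longrightarrow>
     monomial_act d j x = monomial_act d j y \<longleftrightarrow> x = y"
  by (simp add: monomial_act_def rotate_eq_iff scale_coordinates_eq_iff)

lemma monomial_act_smult: "monomial_act d j (smult_vec4 c x) = smult_vec4 c (monomial_act d j x)"
proof -
  have "map2 (*) d (map ((*) c) x) = map ((*) c) (map2 (*) d x)"
  proof (induction d arbitrary: x)
    case (Cons a d)
    then show ?case by (cases x) (simp_all add: mult.left_commute[of a c])
  qed simp
  then show ?thesis by (simp add: monomial_act_def smult_vec4_def rotate_map)
qed

lemma herm_monomial_act:
  "length d = length x \<Longrightarrow> length d = length y \<Longrightarrow> \<forall>c\<in>set d. c \<noteq> 0 \<Longrightarrow>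
     herm (monomial_act d j x) (monomial_act d j y) = herm x y"
  by (simp add: monomial_act_def herm_rotate herm_scale_coordinates)

lemma monomial_act_Phi:
  assumes "length d = n" "\<forall>c\<in>set d. c \<noteq> 0" "x \<in> Phi n"
  shows "monomial_act d j x \<in> Phi n"
proof -
  have x: "length x = n" "x \<noteq> replicate n 0" "herm x x = 0" using assms(3) by (auto simp: Phi_def)
  have "map2 (*) d (replicate n 0) = replicate n (0 :: gf4)"
    using assms(1) by (intro nth_equalityI) auto
  then have "monomial_act d j (replicate n 0) = replicate n 0"
    by (simp add: monomial_act_def rotate_replicate)
  then have "monomial_act d j x \<noteq> replicate n 0"
    using monomial_act_eq_iff[of d x "replicate n 0" j] assms(1,2) x(1,2) by auto
  then show ?thesis
    using herm_monomial_act[of d x x j] assms(1,2) x by (simp add: Phi_def)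
qed

lemma bij_monomial_act:
  assumes "length d = n" "\<forall>c\<in>set d. c \<noteq> 0" "finite (Phi n)"
  shows "bij_betw (monomial_act d j) (Phi n) (Phi n)"
proof -
  have inj: "inj_on (monomial_act d j) (Phi n)"
    using monomial_act_eq_iff assms(1,2) by (auto intro: inj_onI simp: Phi_def)
  moreover have "monomial_act d j ` Phi n \<subseteq> Phi n" using monomial_act_Phi assms by auto
  ultimately have "monomial_act d j ` Phi n = Phi n" using endo_inj_surj assms(3) by blast
  then show ?thesis using inj by (simp add: bij_betw_def)
qed

section \<open>The relation index of \<open>GU(n, 2)\<close> on \<open>\<Phi>(n, 2)\<close>\<close>

lemma length_smult_vec4 [simp]: "length (smult_vec4 c x) = length x"
  by (simp add: smult_vec4_def)

text \<open>The index \<open>l\<close> of the relation \<open>R_l\<close> containing \<open>(x, y)\<close>, with \<open>A4 = \<alpha>\<close> and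
  \<open>O4, A4, B4 = \<alpha>\<^sup>3, \<alpha>\<^sup>4, \<alpha>\<^sup>5\<close>.  The value \<open>6\<close>, for non-proportional orthogonal
  points, is shown not to occur when \<open>n \<le> 3\<close>.\<close>

definition gu_index :: "gf4 list \<Rightarrow> gf4 list \<Rightarrow> nat" where
  "gu_index x y =
     (if y = x then 0 else if y = smult_vec4 A4 x then 1 else if y = smult_vec4 B4 x then 2
      else case herm x y of O4 \<Rightarrow> 3 | A4 \<Rightarrow> 4 | B4 \<Rightarrow> 5 | Z4 \<Rightarrow> 6)"

definition in_Rel :: "nat \<Rightarrow> gf4 list \<Rightarrow> gf4 list \<Rightarrow> bool" where
  "in_Rel l x y \<longleftrightarrow> (if l < 3 then y = smult_vec4 (alpha ^ l) x else herm x y = alpha ^ l)"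

definition gu_index_cert :: "gf4 list list \<Rightarrow> bool" where
  "gu_index_cert L \<longleftrightarrow>
     (\<forall>x\<in>set L. \<forall>y\<in>set L. gu_index x y < 6 \<and> (\<forall>l\<in>set [0..<6]. in_Rel l x y \<longleftrightarrow> gu_index x y = l))"

lemma Rel_eq_in_Rel: "Rel n l = {(x, y). x \<in> Phi n \<and> y \<in> Phi n \<and> in_Rel l x y}"
  by (simp add: Rel_def in_Rel_def)

lemma Rel_eq_gu_index:
  assumes "Phi n = set L" "gu_index_cert L" "l < 6"
  shows "Rel n l = {(x, y). x \<in> Phi n \<and> y \<in> Phi n \<and> gu_index x y = l}"
proof -
  have "in_Rel l x y \<longleftrightarrow> gu_index x y = l" if "x \<in> Phi n" "y \<in> Phi n" for x y
    using assms that unfolding gu_index_cert_def by simp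
  then show ?thesis unfolding Rel_eq_in_Rel by blast
qed

lemma gu_index_monomial_act:
  assumes "length d = length x" "length d = length y" "\<forall>c\<in>set d. c \<noteq> 0"
  shows "gu_index (monomial_act d j x) (monomial_act d j y) = gu_index x y"
proof -
  have "monomial_act d j y = smult_vec4 c (monomial_act d j x) \<longleftrightarrow> y = smult_vec4 c x" for c
    using monomial_act_eq_iff[of d y "smult_vec4 c x" j] assms
    by (simp add: monomial_act_smult[symmetric])
  moreover have "monomial_act d j y = monomial_act d j x \<longleftrightarrow> y = x"
    using monomial_act_eq_iff assms by metis
  moreover have "herm (monomial_act d j x) (monomial_act d j y) = herm x y"
    using herm_monomial_act assms by blast
  ultimately show ?thesis by (simp add: gu_index_def)
qed

definition table_pn :: "nat \<Rightarrow> nat list list \<Rightarrow> nat \<Rightarrow> nat \<Rightarrow> nat \<Rightarrow> nat" where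
  "table_pn D T k a b = (if a < D \<and> b < D then T ! k ! (D * a + b) else 0)"

text \<open>\<open>W\<close> lists, for each point of \<open>L\<close>, a monomial map moving the base point \<open>hd L\<close> to it.\<close>

definition orbit_cert :: "nat \<Rightarrow> gf4 list list \<Rightarrow> (gf4 list \<times> nat) list \<Rightarrow> bool" where
  "orbit_cert n L W \<longleftrightarrow> L \<noteq> [] \<and>
     list_all2 (\<lambda>(d, j) x. length d = n \<and> (\<forall>c\<in>set d. c \<noteq> 0) \<and> monomial_act d j (hd L) = x) W L"

definition pair_counts :: "nat \<Rightarrow> nat list list \<Rightarrow> nat \<Rightarrow> (nat \<times> nat) list \<Rightarrow> bool" where
  "pair_counts D T k ps \<longleftrightarrow>
     (\<forall>a\<in>set [0..<D]. \<forall>b\<in>set [0..<D]. count_list ps (a, b) = table_pn D T k a b)"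

definition base_pair :: "gf4 list list \<Rightarrow> (nat \<Rightarrow> nat) \<Rightarrow> gf4 list \<Rightarrow> gf4 list \<Rightarrow> nat \<times> nat" where
  "base_pair L F y z = (F (gu_index (hd L) z), F (gu_index z y))"

definition base_counts :: "gf4 list list \<Rightarrow> (nat \<Rightarrow> nat) \<Rightarrow> nat \<Rightarrow> nat list list \<Rightarrow> gf4 list \<Rightarrow> bool" where
  "base_counts L F D T y \<longleftrightarrow> pair_counts D T (F (gu_index (hd L) y)) (map (base_pair L F y) L)"

definition intersection_cert :: "gf4 list list \<Rightarrow> (nat \<Rightarrow> nat) \<Rightarrow> nat \<Rightarrow> nat list list \<Rightarrow> bool" where
  "intersection_cert L F D T \<longleftrightarrow>
     (\<forall>k\<in>set [0..<D]. \<exists>y\<in>set L. F (gu_index (hd L) y) = k) \<and>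
     (\<forall>x\<in>set L. \<forall>y\<in>set L. F (gu_index y x) = F (gu_index x y)) \<and>
     list_all (base_counts L F D T) L"

lemma count_list_map: "count_list (map f xs) p = length (filter (\<lambda>z. f z = p) xs)"
  by (induction xs) auto

lemma monomial_orbit_transitive:
  assumes Phi_eq: "Phi n = set L" and orbit: "orbit_cert n L W" and x: "x \<in> Phi n"
  shows "\<exists>\<sigma>. bij_betw \<sigma> (Phi n) (Phi n) \<and>
    (\<forall>u\<in>Phi n. \<forall>v\<in>Phi n. gu_index (\<sigma> u) (\<sigma> v) = gu_index u v) \<and> \<sigma> (hd L) = x"
proof -
  obtain i where i: "i < length L" "L ! i = x" using x Phi_eq by (metis in_set_conv_nth)
  obtain d j where dj: "W ! i = (d, j)" by fastforce
  have d: "length d = n" "\<forall>c\<in>set d. c \<noteq> 0" and "monomial_act d j (hd L) = x"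
    using list_all2_nthD2[OF orbit[unfolded orbit_cert_def, THEN conjunct2] i(1)] dj i(2) by auto
  moreover have "bij_betw (monomial_act d j) (Phi n) (Phi n)"
    using bij_monomial_act[OF d] Phi_eq by simp
  moreover have "\<forall>u\<in>Phi n. \<forall>v\<in>Phi n. gu_index (monomial_act d j u) (monomial_act d j v) = gu_index u v"
    using gu_index_monomial_act d by (auto simp: Phi_def)
  ultimately show ?thesis by blast
qed

lemma card_intersection_base:
  assumes Phi_eq: "Phi n = set L" and dist: "distinct L" and inter: "intersection_cert L F D T"
    and F_less: "\<And>k. F k < D" and y: "y \<in> Phi n"
  shows "card {z\<in>Phi n. F (gu_index (hd L) z) = a \<and> F (gu_index z y) = b}
    = table_pn D T (F (gu_index (hd L) y)) a b"
proof (cases "a < D \<and> b < D")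
  case True
  let ?P = "\<lambda>z. F (gu_index (hd L) z) = a \<and> F (gu_index z y) = b"
  have "pair_counts D T (F (gu_index (hd L) y)) (map (\<lambda>z. (F (gu_index (hd L) z), F (gu_index z y))) L)"
    using inter y Phi_eq unfolding intersection_cert_def base_counts_def base_pair_def list_all_iff by blast
  then have "length (filter ?P L) = table_pn D T (F (gu_index (hd L) y)) a b"
    using True by (simp add: pair_counts_def count_list_map)
  moreover have "{z\<in>Phi n. ?P z} = {z. ?P z} \<inter> set L" using Phi_eq by auto
  ultimately show ?thesis by (simp add: distinct_length_filter[OF dist])
next
  case False
  then have "{z\<in>Phi n. F (gu_index (hd L) z) = a \<and> F (gu_index z y) = b} = {}" using F_less by auto
  then have "card {z\<in>Phi n. F (gu_index (hd L) z) = a \<and> F (gu_index z y) = b} = 0" by (simp only: card.empty)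
  then show ?thesis using False by (auto simp: table_pn_def)
qed

lemma index_scheme_gu:
  assumes Phi_eq: "Phi n = set L" and dist: "distinct L"
    and orbit: "orbit_cert n L W" and inter: "intersection_cert L F D T"
    and F_less: "\<And>k. F k < D" and F_eq_0_iff: "\<And>k. F k = 0 \<longleftrightarrow> k = 0"
  shows "index_scheme (Phi n) (\<lambda>x y. F (gu_index x y)) D (table_pn D T)"
proof
  have x0: "hd L \<in> Phi n" using orbit Phi_eq by (simp add: orbit_cert_def)
  then show "finite (Phi n)" "Phi n \<noteq> {}" using Phi_eq by auto
  fix x y assume xy: "x \<in> Phi n" "y \<in> Phi n"
  show "F (gu_index x y) < D" by (rule F_less)
  show "F (gu_index x y) = 0 \<longleftrightarrow> x = y" by (auto simp: F_eq_0_iff gu_index_def split: gf4.split)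
  show "F (gu_index y x) = F (gu_index x y)"
    using inter xy Phi_eq unfolding intersection_cert_def by blast
  show "card {z\<in>Phi n. F (gu_index x z) = a \<and> F (gu_index z y) = b} = table_pn D T (F (gu_index x y)) a b" for a b
  proof (rule card_intersection_transitive[where r = "\<lambda>x y. F (gu_index x y)" and pn = "table_pn D T", OF x0 _ _ xy])
    show "\<exists>\<sigma>. bij_betw \<sigma> (Phi n) (Phi n) \<and> (\<forall>u\<in>Phi n. \<forall>v\<in>Phi n. F (gu_index (\<sigma> u) (\<sigma> v)) = F (gu_index u v))
        \<and> \<sigma> (hd L) = x'" if "x' \<in> Phi n" for x'
      using monomial_orbit_transitive[OF Phi_eq orbit that] by fastforce
  qed (rule card_intersection_base[OF Phi_eq dist inter F_less])
next
  fix k assume "k < D"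
  then show "\<exists>x\<in>Phi n. \<exists>y\<in>Phi n. F (gu_index x y) = k"
    using inter orbit Phi_eq unfolding intersection_cert_def orbit_cert_def by fastforce
qed

section \<open>The symmetrization and the fusion\<close>

definition symm_class :: "nat \<Rightarrow> nat" where
  "symm_class l = (if l = 0 then 0 else if l \<le> 2 then 1 else if l = 3 then 2 else 3)"

definition fused_class :: "nat \<Rightarrow> nat" where
  "fused_class l = (if l = 0 then 0 else if l \<le> 2 then 1 else 2)"

lemma upt_4: "[0..<4] = [0, 1, 2, 3 :: nat]" and upt_3: "[0..<3] = [0, 1, 2 :: nat]"
  by (simp_all add: upt_rec)

lemma symm_rels_eq:
  assumes "Phi n = set L" "gu_index_cert L"
  shows "[Rel n 0, Rel n 1 \<union> Rel n 2, Rel n 3, Rel n 4 \<union> Rel n 5]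
    = index_rels (Phi n) (\<lambda>x y. symm_class (gu_index x y)) 4"
proof -
  have bound: "gu_index x y < 6" if "x \<in> Phi n" "y \<in> Phi n" for x y
    using assms that by (simp add: gu_index_cert_def)
  show ?thesis
    by (auto simp: index_rels_def upt_4 Rel_eq_gu_index[OF assms] symm_class_def dest: bound)
qed

lemma fused_rels_eq:
  assumes "Phi n = set L" "gu_index_cert L"
  shows "[Rel n 0, Rel n 1 \<union> Rel n 2, Rel n 3 \<union> Rel n 4 \<union> Rel n 5]
    = index_rels (Phi n) (\<lambda>x y. fused_class (gu_index x y)) 3"
proof -
  have bound: "gu_index x y < 6" if "x \<in> Phi n" "y \<in> Phi n" for x y
    using assms that by (simp add: gu_index_cert_def)
  show ?thesis
    by (auto simp: index_rels_def upt_3 Rel_eq_gu_index[OF assms] fused_class_def dest: bound)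
qed

text \<open>The primitive idempotents of the fusion are \<open>E_0\<close>, \<open>E_2\<close> and \<open>E_1 + E_3\<close>.\<close>

definition fusion_cert :: "int list list \<Rightarrow> int list list \<Rightarrow> bool" where
  "fusion_cert Qs Qf \<longleftrightarrow> (\<forall>l\<in>set [0..<6].
     Qf ! fused_class l ! 1 = Qs ! symm_class l ! 2 \<and>
     Qf ! fused_class l ! 2 = Qs ! symm_class l ! 1 + Qs ! symm_class l ! 3)"

lemma rank_fused_le:
  fixes M :: complex
  assumes rank: "\<And>i. 0 < i \<Longrightarrow> i < 4 \<Longrightarrow>
      vec_space.rank (length xs) (mat_on xs (\<lambda>x y. of_int (Qs ! symm_class (gu_index x y) ! i) / M)) \<le> m ! i"
    and fusion: "fusion_cert Qs Qf"
    and index: "\<forall>x\<in>set xs. \<forall>y\<in>set xs. gu_index x y < 6"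
    and i: "0 < i" "i < 3"
  shows "vec_space.rank (length xs) (mat_on xs (\<lambda>x y. of_int (Qf ! fused_class (gu_index x y) ! i) / M))
    \<le> [m ! 0, m ! 2, m ! 1 + m ! 3] ! i"
proof -
  let ?E = "\<lambda>i x y. of_int (Qs ! symm_class (gu_index x y) ! i) / M"
  have cols: "Qf ! fused_class (gu_index x y) ! 1 = Qs ! symm_class (gu_index x y) ! 2"
    "Qf ! fused_class (gu_index x y) ! 2 = Qs ! symm_class (gu_index x y) ! 1 + Qs ! symm_class (gu_index x y) ! 3"
    if "x \<in> set xs" "y \<in> set xs" for x y
    using fusion index that by (auto simp: fusion_cert_def)
  consider "i = 1" | "i = 2" using i by linarith
  then show ?thesis
  proof cases
    case 1
    have "mat_on xs (\<lambda>x y. of_int (Qf ! fused_class (gu_index x y) ! 1) / M) = mat_on xs (?E 2)"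
      by (rule mat_on_cong) (simp only: cols)
    then show ?thesis using rank[of 2] 1 by simp
  next
    case 2
    have "mat_on xs (\<lambda>x y. of_int (Qf ! fused_class (gu_index x y) ! 2) / M)
        = mat_on xs (\<lambda>x y. ?E 1 x y + ?E 3 x y)"
      by (rule mat_on_cong) (simp only: cols of_int_add add_divide_distrib)
    then show ?thesis
      using rank_mat_on_add_le[of xs "?E 1" "?E 3"] rank[of 1] rank[of 3] 2 by simp
  qed
qed

lemma unitary_schemes_from_certs:
  assumes Phi_eq: "Phi n = set L" and dist: "distinct L" and index: "gu_index_cert L"
    and orbit: "orbit_cert n L W"
    and inter4: "intersection_cert L symm_class 4 Ts"
    and inter3: "intersection_cert L fused_class 3 Tf"
    and table4: "int_table_cert 4 (table_pn 4 Ts) Ps Qs M (length L) m"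
    and table3: "int_table_cert 3 (table_pn 3 Tf) Pf Qf M (length L) [m ! 0, m ! 2, m ! 1 + m ! 3]"
    and columns: "list_all2 (\<lambda>i (S, V). column_cert (\<lambda>x y. Qs ! symm_class (gu_index x y) ! i) L S V
      \<and> length S \<le> m ! i) [1, 2, 3] SVs"
    and fusion: "fusion_cert Qs Qf"
    and fused_multiplicities: "m' = [m ! 0, m ! 2, m ! 1 + m ! 3]"
  shows "assoc_scheme (Phi n) [Rel n 0, Rel n 1 \<union> Rel n 2, Rel n 3, Rel n 4 \<union> Rel n 5] \<and>
    assoc_scheme (Phi n) [Rel n 0, Rel n 1 \<union> Rel n 2, Rel n 3 \<union> Rel n 4 \<union> Rel n 5] \<and>
    has_char_table (Phi n) [Rel n 0, Rel n 1 \<union> Rel n 2, Rel n 3, Rel n 4 \<union> Rel n 5] Ps m \<and>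
    has_char_table (Phi n) [Rel n 0, Rel n 1 \<union> Rel n 2, Rel n 3 \<union> Rel n 4 \<union> Rel n 5] Pf m'"
proof -
  interpret symm: index_scheme "Phi n" "\<lambda>x y. symm_class (gu_index x y)" 4 "table_pn 4 Ts"
    by (rule index_scheme_gu[OF Phi_eq dist orbit inter4]) (auto simp: symm_class_def)
  interpret fused: index_scheme "Phi n" "\<lambda>x y. fused_class (gu_index x y)" 3 "table_pn 3 Tf"
    by (rule index_scheme_gu[OF Phi_eq dist orbit inter3]) (auto simp: fused_class_def)
  have card: "card (Phi n) = length L" using Phi_eq dist distinct_card by metis
  have rank: "vec_space.rank (length xs)
      (mat_on xs (\<lambda>x y. of_int (Qs ! symm_class (gu_index x y) ! i) / of_nat M)) \<le> m ! i"
    if "set xs = Phi n" "0 < i" "i < 4" for xs i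
  proof -
    have "i \<in> set [1, 2, 3]" using that by auto
    then show ?thesis using rank_le_column_certs[OF columns] that Phi_eq by simp
  qed
  have "has_char_table (Phi n) symm.Rs Ps m"
    by (rule symm.has_char_table_from_int_cert) (use table4 card rank in auto)
  moreover have "has_char_table (Phi n) fused.Rs Pf m'"
    unfolding fused_multiplicities
  proof (rule fused.has_char_table_from_int_cert)
    show "int_table_cert 3 (table_pn 3 Tf) Pf Qf M (card (Phi n)) [m ! 0, m ! 2, m ! 1 + m ! 3]"
      using table3 card by simp
    fix xs and i :: nat assume "distinct xs" "set xs = Phi n" "0 < i" "i < 3"
    moreover have "\<forall>x\<in>set xs. \<forall>y\<in>set xs. gu_index x y < 6"
      using index Phi_eq \<open>set xs = Phi n\<close> by (simp add: gu_index_cert_def)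
    ultimately show "vec_space.rank (length xs)
        (mat_on xs (\<lambda>x y. of_int (Qf ! fused_class (gu_index x y) ! i) / of_nat M))
      \<le> [m ! 0, m ! 2, m ! 1 + m ! 3] ! i"
      using rank_fused_le[OF rank fusion] by blast
  qed
  ultimately show ?thesis
    unfolding symm_rels_eq[OF Phi_eq index] fused_rels_eq[OF Phi_eq index]
    using symm.assoc_scheme fused.assoc_scheme by blast
qed

section \<open>The cases \<open>n = 2\<close> and \<open>n = 3\<close>\<close>

lemma Phi_eq_filter:
  "Phi n = set (filter (\<lambda>x. x \<noteq> replicate n 0 \<and> herm x x = 0) (List.n_lists n [Z4, O4, A4, B4]))"
proof -
  have "set [Z4, O4, A4, B4] = UNIV" using gf4.exhaust by auto
  then show ?thesis by (auto simp: Phi_def set_n_lists)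
qed

definition points_2 :: "gf4 list list" where
  "points_2 =
     [[O4,O4], [O4,A4], [O4,B4], [A4,O4], [A4,A4], [A4,B4], [B4,O4], [B4,A4], [B4,B4]]"

definition orbit_maps_2 :: "(gf4 list \<times> nat) list" where
  "orbit_maps_2 =
     [([O4,O4], 0), ([O4,A4], 0), ([O4,B4], 0), ([O4,A4], 1), ([A4,A4], 0), ([A4,B4], 0),
      ([O4,B4], 1), ([A4,B4], 1), ([B4,B4], 0)]"

definition intersections_symm_2 :: "nat list list" where
  "intersections_symm_2 =
     [[1, 0, 0, 0, 0, 2, 0, 0, 0, 0, 2, 0, 0, 0, 0, 4],
      [0, 1, 0, 0, 1, 1, 0, 0, 0, 0, 0, 2, 0, 0, 2, 2],
      [0, 0, 1, 0, 0, 0, 0, 2, 1, 0, 1, 0, 0, 2, 0, 2],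
      [0, 0, 0, 1, 0, 0, 1, 1, 0, 1, 0, 1, 1, 1, 1, 1]]"

definition intersections_fused_2 :: "nat list list" where
  "intersections_fused_2 =
     [[1, 0, 0, 0, 2, 0, 0, 0, 6], [0, 1, 0, 1, 1, 0, 0, 0, 6], [0, 0, 1, 0, 0, 2, 1, 2, 3]]"

definition idempotents_symm_2 :: "int list list" where
  "idempotents_symm_2 =
     [[2, 4, 4, 8], [2, -2, 4, -4], [2, 4, -2, -4], [2, -2, -2, 2]]"

definition idempotents_fused_2 :: "int list list" where
  "idempotents_fused_2 =
     [[2, 4, 12], [2, 4, -6], [2, -2, 0]]"

definition rank_witnesses_2 :: "(gf4 list list \<times> int list list) list" where
  "rank_witnesses_2 =
     [([[O4,O4], [O4,A4]],
       [[1, 0], [0, 1], [-1, -1], [0, 1], [-1, -1], [1, 0], [-1, -1], [1, 0], [0, 1]]),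
      ([[O4,O4], [O4,A4]],
       [[1, 0], [0, 1], [-1, -1], [-1, -1], [1, 0], [0, 1], [0, 1], [-1, -1], [1, 0]]),
      ([[O4,O4], [O4,A4], [O4,B4], [A4,O4]],
       [[1, 0, 0, 0], [0, 1, 0, 0], [0, 0, 1, 0], [0, 0, 0, 1], [-1, 1, 0, 1], [-1, 0, 1, 1],
        [1, -1, -1, -1], [0, 0, -1, -1], [0, -1, 0, -1]])]"

lemma Phi_2: "Phi 2 = set points_2"
  unfolding Phi_eq_filter by code_simp

lemma unitary_schemes_2:
  "assoc_scheme (Phi 2) [Rel 2 0, Rel 2 1 \<union> Rel 2 2, Rel 2 3, Rel 2 4 \<union> Rel 2 5] \<and>
   assoc_scheme (Phi 2) [Rel 2 0, Rel 2 1 \<union> Rel 2 2, Rel 2 3 \<union> Rel 2 4 \<union> Rel 2 5] \<and>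
   has_char_table (Phi 2) [Rel 2 0, Rel 2 1 \<union> Rel 2 2, Rel 2 3, Rel 2 4 \<union> Rel 2 5]
     [[1, 2, 2, 4], [1, -1, 2, -2], [1, 2, -1, -2], [1, -1, -1, 1]] [1, 2, 2, 4] \<and>
   has_char_table (Phi 2) [Rel 2 0, Rel 2 1 \<union> Rel 2 2, Rel 2 3 \<union> Rel 2 4 \<union> Rel 2 5]
     [[1, 2, 6], [1, 2, -3], [1, -1, 0]] [1, 2, 6]"
  by (rule unitary_schemes_from_certs[where W = orbit_maps_2 and Ts = intersections_symm_2
        and Tf = intersections_fused_2 and Qs = idempotents_symm_2 and Qf = idempotents_fused_2
        and M = 18 and SVs = rank_witnesses_2, OF Phi_2])
    code_simp+

definition points_3 :: "gf4 list list" where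
  "points_3 =
     [[Z4,O4,O4], [Z4,O4,A4], [Z4,O4,B4], [Z4,A4,O4], [Z4,A4,A4], [Z4,A4,B4], [Z4,B4,O4],
      [Z4,B4,A4], [Z4,B4,B4], [O4,Z4,O4], [O4,Z4,A4], [O4,Z4,B4], [O4,O4,Z4], [O4,A4,Z4],
      [O4,B4,Z4], [A4,Z4,O4], [A4,Z4,A4], [A4,Z4,B4], [A4,O4,Z4], [A4,A4,Z4], [A4,B4,Z4],
      [B4,Z4,O4], [B4,Z4,A4], [B4,Z4,B4], [B4,O4,Z4], [B4,A4,Z4], [B4,B4,Z4]]"

definition orbit_maps_3 :: "(gf4 list \<times> nat) list" where
  "orbit_maps_3 =
     [([O4,O4,O4], 0), ([O4,O4,A4], 0), ([O4,O4,B4], 0), ([O4,A4,O4], 0), ([O4,A4,A4], 0),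
      ([O4,A4,B4], 0), ([O4,B4,O4], 0), ([O4,B4,A4], 0), ([O4,B4,B4], 0), ([O4,O4,O4], 2),
      ([O4,A4,O4], 2), ([O4,B4,O4], 2), ([O4,O4,O4], 1), ([O4,O4,A4], 1), ([O4,O4,B4], 1),
      ([O4,O4,A4], 2), ([O4,A4,A4], 2), ([O4,B4,A4], 2), ([O4,A4,O4], 1), ([O4,A4,A4], 1),
      ([O4,A4,B4], 1), ([O4,O4,B4], 2), ([O4,A4,B4], 2), ([O4,B4,B4], 2), ([O4,B4,O4], 1),
      ([O4,B4,A4], 1), ([O4,B4,B4], 1)]"

definition intersections_symm_3 :: "nat list list" where
  "intersections_symm_3 =
     [[1, 0, 0, 0, 0, 2, 0, 0, 0, 0, 8, 0, 0, 0, 0, 16],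
      [0, 1, 0, 0, 1, 1, 0, 0, 0, 0, 0, 8, 0, 0, 8, 8],
      [0, 0, 1, 0, 0, 0, 0, 2, 1, 0, 1, 6, 0, 2, 6, 8],
      [0, 0, 0, 1, 0, 0, 1, 1, 0, 1, 3, 4, 1, 1, 4, 10]]"

definition intersections_fused_3 :: "nat list list" where
  "intersections_fused_3 =
     [[1, 0, 0, 0, 2, 0, 0, 0, 24], [0, 1, 0, 1, 1, 0, 0, 0, 24], [0, 0, 1, 0, 0, 2, 1, 2, 21]]"

definition idempotents_symm_3 :: "int list list" where
  "idempotents_symm_3 =
     [[2, 12, 16, 24], [2, -6, 16, -12], [2, -6, -2, 6], [2, 3, -2, -3]]"

definition idempotents_fused_3 :: "int list list" where
  "idempotents_fused_3 =
     [[2, 16, 36], [2, 16, -18], [2, -2, 0]]"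

definition rank_witnesses_3 :: "(gf4 list list \<times> int list list) list" where
  "rank_witnesses_3 =
     [([[Z4,O4,O4], [Z4,O4,A4], [Z4,O4,B4], [Z4,A4,O4], [O4,Z4,O4], [A4,Z4,O4]],
       [[1, 0, 0, 0, 0, 0], [0, 1, 0, 0, 0, 0], [0, 0, 1, 0, 0, 0], [0, 0, 0, 1, 0, 0],
        [-1, 1, 0, 1, 0, 0], [-1, 0, 1, 1, 0, 0], [1, -1, -1, -1, 0, 0], [0, 0, -1, -1, 0, 0],
        [0, -1, 0, -1, 0, 0], [0, 0, 0, 0, 1, 0], [1, -1, 0, 0, 1, 0], [1, 0, -1, 0, 1, 0],
        [-1, 0, 0, 0, -1, 0], [0, 0, 0, -1, -1, 0], [-1, 1, 1, 1, -1, 0], [0, 0, 0, 0, 0, 1],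
        [1, -1, 0, 0, 0, 1], [1, 0, -1, 0, 0, 1], [-1, 0, 0, 0, 0, -1], [0, 0, 0, -1, 0, -1],
        [-1, 1, 1, 1, 0, -1], [-2, 1, 1, 0, -1, -1], [-1, 0, 1, 0, -1, -1], [-1, 1, 0, 0, -1, -1],
        [1, -1, -1, 0, 1, 1], [2, -1, -1, -1, 1, 1], [1, 0, 0, 1, 1, 1]]),
      ([[Z4,O4,O4], [Z4,O4,A4], [Z4,O4,B4], [O4,Z4,O4], [O4,Z4,A4], [O4,Z4,B4], [O4,O4,Z4],
        [O4,A4,Z4]],
       [[1, 0, 0, 0, 0, 0, 0, 0], [0, 1, 0, 0, 0, 0, 0, 0], [0, 0, 1, 0, 0, 0, 0, 0],
        [0, 0, 1, 0, 0, 0, 0, 0], [1, 0, 0, 0, 0, 0, 0, 0], [0, 1, 0, 0, 0, 0, 0, 0],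
        [0, 1, 0, 0, 0, 0, 0, 0], [0, 0, 1, 0, 0, 0, 0, 0], [1, 0, 0, 0, 0, 0, 0, 0],
        [0, 0, 0, 1, 0, 0, 0, 0], [0, 0, 0, 0, 1, 0, 0, 0], [0, 0, 0, 0, 0, 1, 0, 0],
        [0, 0, 0, 0, 0, 0, 1, 0], [0, 0, 0, 0, 0, 0, 0, 1], [-1, -1, -1, -1, -1, -1, -1, -1],
        [0, 0, 0, 0, 0, 1, 0, 0], [0, 0, 0, 1, 0, 0, 0, 0], [0, 0, 0, 0, 1, 0, 0, 0],
        [-1, -1, -1, -1, -1, -1, -1, -1], [0, 0, 0, 0, 0, 0, 1, 0], [0, 0, 0, 0, 0, 0, 0, 1],
        [0, 0, 0, 0, 1, 0, 0, 0], [0, 0, 0, 0, 0, 1, 0, 0], [0, 0, 0, 1, 0, 0, 0, 0],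
        [0, 0, 0, 0, 0, 0, 0, 1], [-1, -1, -1, -1, -1, -1, -1, -1], [0, 0, 0, 0, 0, 0, 1, 0]]),
      ([[Z4,O4,O4], [Z4,O4,A4], [Z4,O4,B4], [Z4,A4,O4], [Z4,A4,A4], [Z4,A4,B4], [O4,Z4,O4],
        [O4,Z4,A4], [O4,Z4,B4], [O4,O4,Z4], [O4,A4,Z4], [A4,Z4,O4]],
       [[1, 0, 0, 0, 0, 0, 0, 0, 0, 0, 0, 0], [0, 1, 0, 0, 0, 0, 0, 0, 0, 0, 0, 0],
        [0, 0, 1, 0, 0, 0, 0, 0, 0, 0, 0, 0], [0, 0, 0, 1, 0, 0, 0, 0, 0, 0, 0, 0],
        [0, 0, 0, 0, 1, 0, 0, 0, 0, 0, 0, 0], [0, 0, 0, 0, 0, 1, 0, 0, 0, 0, 0, 0],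
        [0, -1, 0, 0, 0, -1, 0, 0, 0, 0, 0, 0], [0, 0, -1, -1, 0, 0, 0, 0, 0, 0, 0, 0],
        [-1, 0, 0, 0, -1, 0, 0, 0, 0, 0, 0, 0], [0, 0, 0, 0, 0, 0, 1, 0, 0, 0, 0, 0],
        [0, 0, 0, 0, 0, 0, 0, 1, 0, 0, 0, 0], [0, 0, 0, 0, 0, 0, 0, 0, 1, 0, 0, 0],
        [0, 0, 0, 0, 0, 0, 0, 0, 0, 1, 0, 0], [0, 0, 0, 0, 0, 0, 0, 0, 0, 0, 1, 0],
        [0, 0, 0, 0, 0, 0, 1, 1, 1, -1, -1, 0], [0, 0, 0, 0, 0, 0, 0, 0, 0, 0, 0, 1],
        [0, 1, -1, -1, 1, 0, 0, -1, 1, 0, 0, 1], [-1, 1, 0, -1, 0, 1, 1, -1, 0, 0, 0, 1],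
        [0, 1, 0, -1, 0, 0, 0, -1, 0, 0, 1, 1], [0, 1, 0, 0, 1, 1, 1, 0, 1, -1, -1, 1],
        [-1, 0, -1, -1, 0, 0, 0, -1, 0, 1, 0, 1], [1, -1, 0, 1, 0, -1, -1, 0, 0, 0, 0, -1],
        [0, 0, 0, 0, 0, 0, 0, 0, -1, 0, 0, -1], [0, -1, 1, 1, -1, 0, -1, 1, -1, 0, 0, -1],
        [1, 0, 1, 1, 0, 0, 0, 1, 0, -1, -1, -1], [0, -1, 0, 1, 0, 0, -1, 0, -1, 1, 0, -1],
        [0, -1, 0, 0, -1, -1, -1, 0, -1, 0, 1, -1]])]"

lemma Phi_3: "Phi 3 = set points_3"
  unfolding Phi_eq_filter by code_simp

lemma unitary_schemes_3:
  "assoc_scheme (Phi 3) [Rel 3 0, Rel 3 1 \<union> Rel 3 2, Rel 3 3, Rel 3 4 \<union> Rel 3 5] \<and>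
   assoc_scheme (Phi 3) [Rel 3 0, Rel 3 1 \<union> Rel 3 2, Rel 3 3 \<union> Rel 3 4 \<union> Rel 3 5] \<and>
   has_char_table (Phi 3) [Rel 3 0, Rel 3 1 \<union> Rel 3 2, Rel 3 3, Rel 3 4 \<union> Rel 3 5]
     [[1, 2, 8, 16], [1, -1, -4, 4], [1, 2, -1, -2], [1, -1, 2, -2]] [1, 6, 8, 12] \<and>
   has_char_table (Phi 3) [Rel 3 0, Rel 3 1 \<union> Rel 3 2, Rel 3 3 \<union> Rel 3 4 \<union> Rel 3 5]
     [[1, 2, 24], [1, 2, -3], [1, -1, 0]] [1, 8, 18]"
  by (rule unitary_schemes_from_certs[where W = orbit_maps_3 and Ts = intersections_symm_3
        and Tf = intersections_fused_3 and Qs = idempotents_symm_3 and Qf = idempotents_fused_3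
        and M = 54 and SVs = rank_witnesses_3, OF Phi_3])
    code_simp+

theorem corollary5p5:
  shows
  "(\<forall>n \<in> {2::nat, 3}.
      assoc_scheme (Phi n) [Rel n 0, Rel n 1 \<union> Rel n 2, Rel n 3, Rel n 4 \<union> Rel n 5] \<and>
      assoc_scheme (Phi n) [Rel n 0, Rel n 1 \<union> Rel n 2, Rel n 3 \<union> Rel n 4 \<union> Rel n 5]) \<and>
   has_char_table (Phi 2) [Rel 2 0, Rel 2 1 \<union> Rel 2 2, Rel 2 3, Rel 2 4 \<union> Rel 2 5]
     [[1, 2, 2, 4], [1, -1, 2, -2], [1, 2, -1, -2], [1, -1, -1, 1]] [1, 2, 2, 4] \<and>
   has_char_table (Phi 3) [Rel 3 0, Rel 3 1 \<union> Rel 3 2, Rel 3 3, Rel 3 4 \<union> Rel 3 5]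
     [[1, 2, 8, 16], [1, -1, -4, 4], [1, 2, -1, -2], [1, -1, 2, -2]] [1, 6, 8, 12] \<and>
   has_char_table (Phi 2) [Rel 2 0, Rel 2 1 \<union> Rel 2 2, Rel 2 3 \<union> Rel 2 4 \<union> Rel 2 5]
     [[1, 2, 6], [1, 2, -3], [1, -1, 0]] [1, 2, 6] \<and>
   has_char_table (Phi 3) [Rel 3 0, Rel 3 1 \<union> Rel 3 2, Rel 3 3 \<union> Rel 3 4 \<union> Rel 3 5]
     [[1, 2, 24], [1, 2, -3], [1, -1, 0]] [1, 8, 18]"
  using unitary_schemes_2 unitary_schemes_3 by simp

end
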